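(* Let $\mathbb{M}$ be a weight sequence with sequence of quotients $\mathbf{m}$. Then (i) $\gamma(\mathbb{M})=\beta(\mathbf{m})=1/\alpha(\nu_{\mathbf{m}})\le1/\alpha(\omega_{\mathbb{M}})=\gamma(\omega_{\mathbb{M}})$; (ii) $\alpha(\mathbf{m})=1/\beta(\nu_{\mathbf{m}})=1/\beta(\omega_{\mathbb{M}})$; (iii) if $\mathbb{M}$ has in addition moderate growth, then $\gamma(\mathbb{M})=\gamma(\omega_{\mathbb{M}})$.
   Context: A weight sequence is $\mathbb{M}=(M_p)_{p\in\mathbb{N}_0}$ of positive reals with $M_0=1$, $M_p^2\le M_{p-1}M_{p+1}$ ($p\ge1$) and $M_p^{1/p}\to\infty$; $m_p=M_{p+1}/M_p$. Moderate growth: there is $A>0$ with $M_{p+q}\le A^{p+q}M_pM_q$ for all $p,q\in\mathbb{N}_0$. $\omega_{\mathbb{M}}(t):=\sup_{p\in\mathbb{N}_0}\log(t^p/M_p)$ for $t>0$, $\omega_{\mathbb{M}}(0)=0$; $\nu_{\mathbf{m}}(t):=\#\{j\in\mathbb{N}_0:m_j\le t\}$ for $t>0$. For a positive measurable $f$ on $[A,\infty)$: $\alpha(f):=\inf\{\alpha:\exists C_\alpha>0\ \forall\Lambda>1,\ \limsup_{x\to\infty}\sup_{\lambda\in[1,\Lambda]}\frac{f(\lambda x)}{\lambda^{\alpha}f(x)}\le C_\alpha\}$, $\beta(f):=\sup\{\beta:\exists D_\beta>0\ \forall\Lambda>1,\ \liminf_{x\to\infty}\inf_{\lambda\in[1,\Lambda]}\frac{f(\lambda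 x)}{\lambda^{\beta}f(x)}\ge D_\beta\}$; for $\omega_{\mathbb{M}}$, $\nu_{\mathbf{m}}$ computed on any $[A,\infty)$, $A>0$, where the function is positive; for $\mathbf{m}$, these are the indices of the step function $x\mapsto m_{\lfloor x\rfloor-1}$, $x\ge1$. For a nondecreasing $\sigma$ tending to $\infty$ and $\gamma>0$, $(P_{\sigma,\gamma})$ holds if there is $K>1$ with $\limsup_{t\to\infty}\sigma(K^{\gamma}t)/\sigma(t)<K$; $\gamma(\sigma):=\sup\{\gamma>0:(P_{\sigma,\gamma})\}$ ($:=0$ if none). For the sequence, $\mathbb{M}$ satisfies $(P_\gamma)$ ($\gamma\in\mathbb{R}$) if there is a real sequence $\boldsymbol{\ell}$ and $c\ge1$ with $c^{-1}m_p\le\ell_p\le cm_p$ and $((p+1)^{-\gamma}\ell_p)_p$ nondecreasing; $\gamma(\mathbb{M}):=\sup\{\gamma:(P_\gamma)\text{ holds}\}$. Conventions $1/0=\infty$, $1/\infty=0$. *)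

theory Defs
  imports "HOL-Analysis.Analysis" "HOL-Library.Liminf_Limsup"
begin

definition weight_seq :: "(nat \<Rightarrow> real) \<Rightarrow> bool" where
  "weight_seq M \<longleftrightarrow> M 0 = 1 \<and> (\<forall>p. M p > 0) \<and>
     (\<forall>p\<ge>1. (M p)^2 \<le> M (p - 1) * M (p + 1)) \<and>
     filterlim (\<lambda>p. root p (M p)) at_top sequentially"

definition quot :: "(nat \<Rightarrow> real) \<Rightarrow> nat \<Rightarrow> real" where
  "quot M p = M (Suc p) / M p"

definition moderate_growth :: "(nat \<Rightarrow> real) \<Rightarrow> bool" where
  "moderate_growth M \<longleftrightarrow> (\<exists>A>0. \<forall>p q. M (p + q) \<le> A ^ (p + q) * M p * M q)"

definition omega_w :: "(nat \<Rightarrow> real) \<Rightarrow> real \<Rightarrow> real" where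
  "omega_w M t = (if t > 0 then (SUP p. ln (t ^ p / M p)) else 0)"

definition nu_c :: "(nat \<Rightarrow> real) \<Rightarrow> real \<Rightarrow> real" where
  "nu_c m t = real (card {j. m j \<le> t})"

text \<open>Step function x \<mapsto> m_{floor x - 1} (relevant for x \<ge> 1).\<close>
definition step_fun :: "(nat \<Rightarrow> real) \<Rightarrow> real \<Rightarrow> real" where
  "step_fun m x = m (nat \<lfloor>x\<rfloor> - 1)"

text \<open>Matuszewska-type indices alpha(f), beta(f) (values in extended reals;
  inf of empty set = \<infinity>, sup of empty set = -\<infinity>). Only the behaviour as x \<rightarrow> \<infinity> matters.\<close>
definition alpha_idx :: "(real \<Rightarrow> real) \<Rightarrow> ereal" where
  "alpha_idx f = Inf {ereal a | a. \<exists>C>0. \<forall>\<Lambda>>1.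
      Limsup at_top (\<lambda>x. SUP l\<in>{1..\<Lambda>}. ereal (f (l * x) / (l powr a * f x))) \<le> ereal C}"

definition beta_idx :: "(real \<Rightarrow> real) \<Rightarrow> ereal" where
  "beta_idx f = Sup {ereal b | b. \<exists>D>0. \<forall>\<Lambda>>1.
      Liminf at_top (\<lambda>x. INF l\<in>{1..\<Lambda>}. ereal (f (l * x) / (l powr b * f x))) \<ge> ereal D}"

definition P_fun :: "(real \<Rightarrow> real) \<Rightarrow> real \<Rightarrow> bool" where
  "P_fun \<sigma> g \<longleftrightarrow> (\<exists>K>1. Limsup at_top (\<lambda>t. ereal (\<sigma> (K powr g * t) / \<sigma> t)) < ereal K)"

definition gamma_fun :: "(real \<Rightarrow> real) \<Rightarrow> ereal" where
  "gamma_fun \<sigma> = (if {g. g > 0 \<and> P_fun \<sigma> g} = {} then 0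
                    else Sup {ereal g | g. g > 0 \<and> P_fun \<sigma> g})"

definition P_seq :: "(nat \<Rightarrow> real) \<Rightarrow> real \<Rightarrow> bool" where
  "P_seq M g \<longleftrightarrow> (\<exists>(l::nat \<Rightarrow> real) c. c \<ge> 1 \<and>
      (\<forall>p. quot M p / c \<le> l p \<and> l p \<le> c * quot M p) \<and>
      mono (\<lambda>p. l p / (real p + 1) powr g))"

definition gamma_seq :: "(nat \<Rightarrow> real) \<Rightarrow> ereal" where
  "gamma_seq M = Sup {ereal g | g. P_seq M g}"

end

theory Submission
  imports Defs
begin

(*
  All indices are read off from uniform bounds f(l x) <= C l^a f(x), resp. f(l x) >= D l^b f(x),
  valid for all l >= 1 and all large x: alpha(f) and beta(f) are the infimum and supremum of the
  admissible exponents a and b, because a bound on l in [1, Lambda] iterates to all l >= 1 at the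
  price of raising the exponent by ln C / ln Lambda, which is small for large Lambda.  (P_gamma)
  says that m_p/(p+1)^gamma is almost increasing, i.e. that gamma is a lower exponent of the step
  function of m, and (P_{sigma,gamma}) holds for every gamma < 1/a when a is an upper exponent of
  sigma.  The step function of m and nu_m are mutually inverse, which turns lower exponents of
  one into reciprocal upper exponents of the other.  Finally omega_M(t) is the sum of ln(t/m_j)
  over m_j <= t, so nu(t) <= omega(e t) - omega(t) and omega(H t) - omega(t) <= nu(H t) ln H.
  Telescoping along t, e t, e^2 t, ... transfers upper exponents from nu to omega and lower ones
  in both directions; moderate growth gives omega(H t) >= 2 omega(t), hence omega <= 2 ln H nu,
  which transfers upper exponents back from omega to nu.
*)

section \<open>Uniform exponents and the indices alpha and beta\<close>

definition upper_exps :: "(real \<Rightarrow> real) \<Rightarrow> real set" where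
  "upper_exps f = {a. \<exists>C>0. \<exists>x0. \<forall>x\<ge>x0. \<forall>l\<ge>1. f (l * x) \<le> C * l powr a * f x}"

definition lower_exps :: "(real \<Rightarrow> real) \<Rightarrow> real set" where
  "lower_exps f = {b. \<exists>D>0. \<exists>x0. \<forall>x\<ge>x0. \<forall>l\<ge>1. D * l powr b * f x \<le> f (l * x)}"

lemma upper_exps_mono:
  assumes "a \<in> upper_exps f" "a \<le> a'" and nonneg: "\<And>x. x1 \<le> x \<Longrightarrow> 0 \<le> f x"
  shows "a' \<in> upper_exps f"
proof -
  obtain C x0 where "C > 0" and bound: "\<And>x l. x0 \<le> x \<Longrightarrow> 1 \<le> l \<Longrightarrow> f (l * x) \<le> C * l powr a * f x"
    using assms(1) unfolding upper_exps_def by blast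
  have "f (l * x) \<le> C * l powr a' * f x" if "max x0 x1 \<le> x" "1 \<le> l" for x l
  proof -
    have "f (l * x) \<le> C * l powr a * f x" using bound that by simp
    also have "\<dots> \<le> C * l powr a' * f x"
      using that \<open>C > 0\<close> \<open>a \<le> a'\<close> nonneg[of x] by (intro mult_right_mono mult_left_mono powr_mono) auto
    finally show ?thesis .
  qed
  then show ?thesis unfolding upper_exps_def using \<open>C > 0\<close> by blast
qed

lemma lower_exps_mono:
  assumes "b \<in> lower_exps f" "b' \<le> b" and nonneg: "\<And>x. x1 \<le> x \<Longrightarrow> 0 \<le> f x"
  shows "b' \<in> lower_exps f"
proof -
  obtain D x0 where "D > 0" and bound: "\<And>x l. x0 \<le> x \<Longrightarrow> 1 \<le> l \<Longrightarrow> D * l powr b * f x \<le> f (l * x)"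
    using assms(1) unfolding lower_exps_def by blast
  have "D * l powr b' * f x \<le> f (l * x)" if "max x0 x1 \<le> x" "1 \<le> l" for x l
  proof -
    have "D * l powr b' * f x \<le> D * l powr b * f x"
      using that \<open>D > 0\<close> \<open>b' \<le> b\<close> nonneg[of x] by (intro mult_right_mono mult_left_mono powr_mono) auto
    also have "\<dots> \<le> f (l * x)" using bound that by simp
    finally show ?thesis .
  qed
  then show ?thesis unfolding lower_exps_def using \<open>D > 0\<close> by blast
qed

lemma powr_bound_iterate:
  fixes f :: "real \<Rightarrow> real"
  assumes "0 \<le> x0" "1 < \<Lambda>" "1 \<le> C"
    and nonneg: "\<And>x. x0 \<le> x \<Longrightarrow> 0 \<le> f x"
    and local: "\<And>x l. x0 \<le> x \<Longrightarrow> 1 \<le> l \<Longrightarrow> l \<le> \<Lambda> \<Longrightarrow> f (l * x) \<le> C * l powr a * f x"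
    and "x0 \<le> x" "1 \<le> l" "l \<le> \<Lambda> ^ Suc k"
  shows "f (l * x) \<le> C ^ Suc k * l powr a * f x"
  using assms(6-8)
proof (induction k arbitrary: x l)
  case 0
  then show ?case using local by simp
next
  case (Suc k)
  show ?case
  proof (cases "l \<le> \<Lambda> ^ Suc k")
    case True
    then have "f (l * x) \<le> C ^ Suc k * l powr a * f x" using Suc by blast
    also have "\<dots> \<le> C ^ Suc (Suc k) * l powr a * f x"
      using nonneg[OF Suc.prems(1)] \<open>1 \<le> C\<close> by (intro mult_right_mono power_increasing) auto
    finally show ?thesis .
  next
    case False
    define \<mu> where "\<mu> = l / \<Lambda>"
    have "\<Lambda> \<le> \<Lambda> ^ Suc k" using \<open>1 < \<Lambda>\<close> by (simp add: power_increasing[of 1 "Suc k", simplified])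
    then have "\<Lambda> \<le> l" using False by linarith
    then have "1 \<le> \<mu>" "\<mu> \<le> \<Lambda> ^ Suc k"
      using Suc.prems \<open>1 < \<Lambda>\<close> by (auto simp: \<mu>_def field_simps)
    moreover have "x0 \<le> \<mu> * x"
      using \<open>1 \<le> \<mu>\<close> Suc.prems(1) \<open>0 \<le> x0\<close> by (metis mult_1 mult_right_mono order.trans)
    moreover have l: "l = \<Lambda> * \<mu>" using \<open>1 < \<Lambda>\<close> by (simp add: \<mu>_def)
    ultimately have "f (l * x) \<le> C * \<Lambda> powr a * f (\<mu> * x)"
      using local[of "\<mu> * x" \<Lambda>] \<open>1 < \<Lambda>\<close> by (simp add: mult.assoc)
    also have "\<dots> \<le> C * \<Lambda> powr a * (C ^ Suc k * \<mu> powr a * f x)"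
      using Suc.IH \<open>1 \<le> \<mu>\<close> \<open>\<mu> \<le> \<Lambda> ^ Suc k\<close> Suc.prems(1) \<open>1 \<le> C\<close> by (intro mult_left_mono) auto
    also have "\<dots> = C ^ Suc (Suc k) * l powr a * f x"
      using \<open>1 < \<Lambda>\<close> \<open>1 \<le> \<mu>\<close> by (simp add: l powr_mult)
    finally show ?thesis .
  qed
qed

lemma powr_bound_extend:
  fixes f :: "real \<Rightarrow> real"
  assumes "0 \<le> x0" "1 < \<Lambda>" "1 \<le> C"
    and nonneg: "\<And>x. x0 \<le> x \<Longrightarrow> 0 \<le> f x"
    and local: "\<And>x l. x0 \<le> x \<Longrightarrow> 1 \<le> l \<Longrightarrow> l \<le> \<Lambda> \<Longrightarrow> f (l * x) \<le> C * l powr a * f x"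
    and "x0 \<le> x" "1 \<le> l"
  shows "f (l * x) \<le> C * l powr (a + ln C / ln \<Lambda>) * f x"
proof -
  define k where "k = nat \<lfloor>ln l / ln \<Lambda>\<rfloor>"
  have ln\<Lambda>: "0 < ln \<Lambda>" using \<open>1 < \<Lambda>\<close> by simp
  have "real k = of_int \<lfloor>ln l / ln \<Lambda>\<rfloor>" using \<open>1 \<le> l\<close> ln\<Lambda> unfolding k_def by simp
  then have k_le: "real k \<le> ln l / ln \<Lambda>" and k_gt: "ln l / ln \<Lambda> < real k + 1" by linarith+
  have "ln l < real (Suc k) * ln \<Lambda>" using k_gt ln\<Lambda> by (simp add: divide_less_eq algebra_simps)
  also have "\<dots> = ln (\<Lambda> ^ Suc k)" using \<open>1 < \<Lambda>\<close> by (subst ln_realpow) auto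
  finally have "l \<le> \<Lambda> ^ Suc k" using \<open>1 \<le> l\<close> \<open>1 < \<Lambda>\<close> by simp
  have "C ^ k = exp (real k * ln C)" using \<open>1 \<le> C\<close> by (simp add: exp_of_nat_mult)
  also have "\<dots> \<le> exp (ln l / ln \<Lambda> * ln C)"
    using mult_right_mono[OF k_le, of "ln C"] \<open>1 \<le> C\<close> by simp
  also have "\<dots> = l powr (ln C / ln \<Lambda>)" using \<open>1 \<le> l\<close> by (simp add: powr_def)
  finally have Ck: "C ^ k \<le> l powr (ln C / ln \<Lambda>)" .
  have "f (l * x) \<le> C * C ^ k * l powr a * f x"
    using powr_bound_iterate[OF assms(1-5,6,7) \<open>l \<le> \<Lambda> ^ Suc k\<close>] by simp
  also have "\<dots> \<le> C * l powr (ln C / ln \<Lambda>) * l powr a * f x"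
    using Ck nonneg[OF \<open>x0 \<le> x\<close>] \<open>1 \<le> C\<close> by (intro mult_right_mono mult_left_mono) auto
  also have "\<dots> = C * l powr (a + ln C / ln \<Lambda>) * f x"
    using \<open>1 \<le> l\<close> by (simp add: powr_add)
  finally show ?thesis .
qed

lemma powr_lower_bound_extend:
  fixes f :: "real \<Rightarrow> real"
  assumes "0 \<le> x0" "1 < \<Lambda>" "0 < D" "D \<le> 1"
    and pos: "\<And>x. x0 \<le> x \<Longrightarrow> 0 < f x"
    and local: "\<And>x l. x0 \<le> x \<Longrightarrow> 1 \<le> l \<Longrightarrow> l \<le> \<Lambda> \<Longrightarrow> D * l powr b * f x \<le> f (l * x)"
    and "x0 \<le> x" "1 \<le> l"
  shows "D * l powr (b + ln D / ln \<Lambda>) * f x \<le> f (l * x)"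
proof -
  have local_inverse: "inverse (f (l * x)) \<le> inverse D * l powr (- b) * inverse (f x)"
    if "x0 \<le> x" "1 \<le> l" "l \<le> \<Lambda>" for x l
  proof -
    have "x0 \<le> l * x" using that \<open>0 \<le> x0\<close> by (metis mult_1 mult_right_mono order.trans)
    then show ?thesis
      using local[OF that] pos that \<open>0 < D\<close>
      by (simp add: powr_minus field_simps)
  qed
  have "inverse (f (l * x)) \<le> inverse D * l powr (- b + ln (inverse D) / ln \<Lambda>) * inverse (f x)"
    by (rule powr_bound_extend[where f = "\<lambda>x. inverse (f x)", OF assms(1,2) _ _ local_inverse assms(7,8)])
      (use assms(3,4) pos in \<open>auto simp: less_imp_le field_simps\<close>)
  also have "\<dots> = inverse (D * l powr (b + ln D / ln \<Lambda>) * f x)"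
    using \<open>0 < D\<close> powr_minus[of l "b + ln D / ln \<Lambda>"] by (simp add: ln_inverse algebra_simps)
  finally have "inverse (f (l * x)) \<le> inverse (D * l powr (b + ln D / ln \<Lambda>) * f x)" .
  moreover have "x0 \<le> l * x" using assms(1,7,8) by (metis mult_1 mult_right_mono order.trans)
  ultimately show ?thesis
    using inverse_le_imp_le pos \<open>0 < D\<close> by blast
qed

lemma Inf_ereal_image_eq_if_shifts:
  fixes U S :: "real set"
  assumes "U \<subseteq> S" and shift: "\<And>a e. a \<in> S \<Longrightarrow> 0 < e \<Longrightarrow> a + e \<in> U"
  shows "Inf (ereal ` U) = Inf (ereal ` S)"
proof (rule antisym)
  show "Inf (ereal ` U) \<le> Inf (ereal ` S)"
  proof (rule Inf_greatest)
    fix y assume "y \<in> ereal ` S"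
    then obtain a where "a \<in> S" "y = ereal a" by auto
    show "Inf (ereal ` U) \<le> y" unfolding \<open>y = ereal a\<close>
    proof (rule ereal_le_epsilon2)
      fix e :: real assume "0 < e"
      then have "Inf (ereal ` U) \<le> ereal (a + e)" using shift[OF \<open>a \<in> S\<close>] by (intro Inf_lower) auto
      then show "Inf (ereal ` U) \<le> ereal a + ereal e" by simp
    qed
  qed
qed (use assms(1) in \<open>intro Inf_superset_mono image_mono\<close>)

lemma Sup_ereal_image_eq_if_shifts:
  fixes U S :: "real set"
  assumes "U \<subseteq> S" and shift: "\<And>b e. b \<in> S \<Longrightarrow> 0 < e \<Longrightarrow> b - e \<in> U"
  shows "Sup (ereal ` U) = Sup (ereal ` S)"
proof (rule antisym)
  show "Sup (ereal ` S) \<le> Sup (ereal ` U)"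
  proof (rule Sup_least)
    fix y assume "y \<in> ereal ` S"
    then obtain b where "b \<in> S" "y = ereal b" by auto
    show "y \<le> Sup (ereal ` U)" unfolding \<open>y = ereal b\<close>
    proof (rule ereal_le_epsilon2)
      fix e :: real assume "0 < e"
      then have "ereal (b - e) \<le> Sup (ereal ` U)" using shift[OF \<open>b \<in> S\<close>] by (intro Sup_upper) auto
      then have "ereal (b - e) + ereal e \<le> Sup (ereal ` U) + ereal e" by (rule add_right_mono)
      then show "ereal b \<le> Sup (ereal ` U) + ereal e" by simp
    qed
  qed
qed (use assms(1) in \<open>intro Sup_subset_mono image_mono\<close>)

definition alpha_exps :: "(real \<Rightarrow> real) \<Rightarrow> real set" where
  "alpha_exps f = {a. \<exists>C>0. \<forall>\<Lambda>>1.
      Limsup at_top (\<lambda>x. SUP l\<in>{1..\<Lambda>}. ereal (f (l * x) / (l powr a * f x))) \<le> ereal C}"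

definition beta_exps :: "(real \<Rightarrow> real) \<Rightarrow> real set" where
  "beta_exps f = {b. \<exists>D>0. \<forall>\<Lambda>>1.
      Liminf at_top (\<lambda>x. INF l\<in>{1..\<Lambda>}. ereal (f (l * x) / (l powr b * f x))) \<ge> ereal D}"

lemma upper_exps_subset_alpha_exps:
  fixes f :: "real \<Rightarrow> real"
  assumes pos: "\<And>x. x1 \<le> x \<Longrightarrow> 0 < f x"
  shows "upper_exps f \<subseteq> alpha_exps f"
proof
  fix a assume "a \<in> upper_exps f"
  then obtain C x0 where "C > 0"
    and bound: "\<And>x l. x0 \<le> x \<Longrightarrow> 1 \<le> l \<Longrightarrow> f (l * x) \<le> C * l powr a * f x"
    unfolding upper_exps_def by blast
  have "(SUP l\<in>{1..\<Lambda>}. ereal (f (l * x) / (l powr a * f x))) \<le> ereal C" if "max x0 x1 \<le> x" for \<Lambda> x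
  proof (rule SUP_least)
    fix l assume "l \<in> {1..\<Lambda>}"
    then have "f (l * x) \<le> C * (l powr a * f x)" "0 < l powr a * f x"
      using bound[of x l] pos[of x] that by (auto simp: mult.assoc)
    then show "ereal (f (l * x) / (l powr a * f x)) \<le> ereal C" by (simp add: divide_le_eq)
  qed
  then have "eventually (\<lambda>x. (SUP l\<in>{1..\<Lambda>}. ereal (f (l * x) / (l powr a * f x))) \<le> ereal C) at_top" for \<Lambda>
    unfolding eventually_at_top_linorder by blast
  then have "Limsup at_top (\<lambda>x. SUP l\<in>{1..\<Lambda>}. ereal (f (l * x) / (l powr a * f x))) \<le> ereal C" for \<Lambda>
    by (rule Limsup_bounded)
  then show "a \<in> alpha_exps f" unfolding alpha_exps_def using \<open>C > 0\<close> by blast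
qed

lemma add_mem_upper_exps_if_mem_alpha_exps:
  fixes f :: "real \<Rightarrow> real"
  assumes pos: "\<And>x. x1 \<le> x \<Longrightarrow> 0 < f x" and "a \<in> alpha_exps f" "0 < e"
  shows "a + e \<in> upper_exps f"
proof -
  obtain C where "C > 0" and lim: "\<And>\<Lambda>. 1 < \<Lambda> \<Longrightarrow>
      Limsup at_top (\<lambda>x. SUP l\<in>{1..\<Lambda>}. ereal (f (l * x) / (l powr a * f x))) \<le> ereal C"
    using \<open>a \<in> alpha_exps f\<close> unfolding alpha_exps_def by blast
  define C' where "C' = max (2 * C) 1"
  define \<Lambda> where "\<Lambda> = exp (max 1 (ln C' / e))"
  have "1 < \<Lambda>" unfolding \<Lambda>_def by simp
  have "ln C' = e * (ln C' / e)" using \<open>0 < e\<close> by simp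
  also have "\<dots> \<le> e * ln \<Lambda>" unfolding \<Lambda>_def using \<open>0 < e\<close> by (intro mult_left_mono) auto
  finally have small: "ln C' / ln \<Lambda> \<le> e" using \<open>1 < \<Lambda>\<close> by (simp add: divide_le_eq)
  have "Limsup at_top (\<lambda>x. SUP l\<in>{1..\<Lambda>}. ereal (f (l * x) / (l powr a * f x))) < ereal (2 * C)"
    using lim[OF \<open>1 < \<Lambda>\<close>] by (rule le_less_trans) (use \<open>C > 0\<close> in simp)
  from Limsup_lessD[OF this] obtain x2 where
    x2: "\<And>x. x2 \<le> x \<Longrightarrow> (SUP l\<in>{1..\<Lambda>}. ereal (f (l * x) / (l powr a * f x))) < ereal (2 * C)"
    unfolding eventually_at_top_linorder by blast
  define x0 where "x0 = max (max x1 x2) 0"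
  have local: "f (l * x) \<le> C' * l powr a * f x" if "x0 \<le> x" "1 \<le> l" "l \<le> \<Lambda>" for x l
  proof -
    have "ereal (f (l * x) / (l powr a * f x)) \<le> (SUP l\<in>{1..\<Lambda>}. ereal (f (l * x) / (l powr a * f x)))"
      using that by (intro SUP_upper) auto
    also have "\<dots> < ereal (2 * C)" using x2 that unfolding x0_def by simp
    finally have "f (l * x) < 2 * C * (l powr a * f x)"
      using pos[of x] that unfolding x0_def by (simp add: divide_less_eq)
    also have "\<dots> \<le> C' * (l powr a * f x)"
      unfolding C'_def using pos[of x] that unfolding x0_def by (intro mult_right_mono) auto
    finally show ?thesis by (simp add: mult.assoc)
  qed
  have "f (l * x) \<le> C' * l powr (a + ln C' / ln \<Lambda>) * f x" if "x0 \<le> x" "1 \<le> l" for x l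
    by (rule powr_bound_extend[OF _ \<open>1 < \<Lambda>\<close> _ _ local that])
      (use pos in \<open>auto simp: x0_def C'_def less_imp_le\<close>)
  moreover have "0 < C'" unfolding C'_def by simp
  ultimately have "a + ln C' / ln \<Lambda> \<in> upper_exps f" unfolding upper_exps_def by blast
  then show ?thesis
    by (rule upper_exps_mono) (use small pos in \<open>auto intro: less_imp_le\<close>)
qed

lemma alpha_idx_eq_Inf_upper_exps:
  fixes f :: "real \<Rightarrow> real"
  assumes "\<And>x. x1 \<le> x \<Longrightarrow> 0 < f x"
  shows "alpha_idx f = Inf (ereal ` upper_exps f)"
proof -
  have "alpha_idx f = Inf (ereal ` alpha_exps f)"
    unfolding alpha_idx_def alpha_exps_def by (simp add: setcompr_eq_image)
  also have "\<dots> = Inf (ereal ` upper_exps f)"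
    using upper_exps_subset_alpha_exps add_mem_upper_exps_if_mem_alpha_exps assms
    by (intro Inf_ereal_image_eq_if_shifts[symmetric]) blast+
  finally show ?thesis .
qed

lemma lower_exps_subset_beta_exps:
  fixes f :: "real \<Rightarrow> real"
  assumes pos: "\<And>x. x1 \<le> x \<Longrightarrow> 0 < f x"
  shows "lower_exps f \<subseteq> beta_exps f"
proof
  fix b assume "b \<in> lower_exps f"
  then obtain D x0 where "D > 0"
    and bound: "\<And>x l. x0 \<le> x \<Longrightarrow> 1 \<le> l \<Longrightarrow> D * l powr b * f x \<le> f (l * x)"
    unfolding lower_exps_def by blast
  have "ereal D \<le> (INF l\<in>{1..\<Lambda>}. ereal (f (l * x) / (l powr b * f x)))" if "max x0 x1 \<le> x" for \<Lambda> x
  proof (rule INF_greatest)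
    fix l assume "l \<in> {1..\<Lambda>}"
    then have "D * (l powr b * f x) \<le> f (l * x)" "0 < l powr b * f x"
      using bound[of x l] pos[of x] that by (auto simp: mult.assoc)
    then show "ereal D \<le> ereal (f (l * x) / (l powr b * f x))" by (simp add: le_divide_eq)
  qed
  then have "eventually (\<lambda>x. ereal D \<le> (INF l\<in>{1..\<Lambda>}. ereal (f (l * x) / (l powr b * f x)))) at_top" for \<Lambda>
    unfolding eventually_at_top_linorder by blast
  then have "ereal D \<le> Liminf at_top (\<lambda>x. INF l\<in>{1..\<Lambda>}. ereal (f (l * x) / (l powr b * f x)))" for \<Lambda>
    by (rule Liminf_bounded)
  then show "b \<in> beta_exps f" unfolding beta_exps_def using \<open>D > 0\<close> by blast
qed

lemma diff_mem_lower_exps_if_mem_beta_exps: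
  fixes f :: "real \<Rightarrow> real"
  assumes pos: "\<And>x. x1 \<le> x \<Longrightarrow> 0 < f x" and "b \<in> beta_exps f" "0 < e"
  shows "b - e \<in> lower_exps f"
proof -
  obtain D where "D > 0" and lim: "\<And>\<Lambda>. 1 < \<Lambda> \<Longrightarrow>
      ereal D \<le> Liminf at_top (\<lambda>x. INF l\<in>{1..\<Lambda>}. ereal (f (l * x) / (l powr b * f x)))"
    using \<open>b \<in> beta_exps f\<close> unfolding beta_exps_def by blast
  define D' where "D' = min (D / 2) 1"
  have "0 < D'" "D' \<le> 1" unfolding D'_def using \<open>D > 0\<close> by auto
  define \<Lambda> where "\<Lambda> = exp (max 1 (- ln D' / e))"
  have "1 < \<Lambda>" unfolding \<Lambda>_def by simp
  have "- ln D' = e * (- ln D' / e)" using \<open>0 < e\<close> by simp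
  also have "\<dots> \<le> e * ln \<Lambda>" unfolding \<Lambda>_def using \<open>0 < e\<close> by (intro mult_left_mono) auto
  finally have small: "- e \<le> ln D' / ln \<Lambda>" using \<open>1 < \<Lambda>\<close> by (simp add: le_divide_eq)
  have "ereal (D / 2) < Liminf at_top (\<lambda>x. INF l\<in>{1..\<Lambda>}. ereal (f (l * x) / (l powr b * f x)))"
    using lim[OF \<open>1 < \<Lambda>\<close>] by (rule less_le_trans[rotated]) (use \<open>D > 0\<close> in simp)
  from less_LiminfD[OF this] obtain x2 where
    x2: "\<And>x. x2 \<le> x \<Longrightarrow> ereal (D / 2) < (INF l\<in>{1..\<Lambda>}. ereal (f (l * x) / (l powr b * f x)))"
    unfolding eventually_at_top_linorder by blast
  define x0 where "x0 = max (max x1 x2) 0"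
  have local: "D' * l powr b * f x \<le> f (l * x)" if "x0 \<le> x" "1 \<le> l" "l \<le> \<Lambda>" for x l
  proof -
    have "ereal (D / 2) < (INF l\<in>{1..\<Lambda>}. ereal (f (l * x) / (l powr b * f x)))"
      using x2 that unfolding x0_def by simp
    also have "\<dots> \<le> ereal (f (l * x) / (l powr b * f x))"
      using that by (intro INF_lower) auto
    finally have "D / 2 * (l powr b * f x) < f (l * x)"
      using pos[of x] that unfolding x0_def by (simp add: less_divide_eq)
    moreover have "D' * (l powr b * f x) \<le> D / 2 * (l powr b * f x)"
      unfolding D'_def using pos[of x] that unfolding x0_def by (intro mult_right_mono) auto
    ultimately show ?thesis by (simp add: mult.assoc)
  qed
  have "D' * l powr (b + ln D' / ln \<Lambda>) * f x \<le> f (l * x)" if "x0 \<le> x" "1 \<le> l" for x l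
    by (rule powr_lower_bound_extend[OF _ \<open>1 < \<Lambda>\<close> \<open>0 < D'\<close> \<open>D' \<le> 1\<close> _ local that])
      (use pos in \<open>auto simp: x0_def\<close>)
  then have "b + ln D' / ln \<Lambda> \<in> lower_exps f"
    unfolding lower_exps_def using \<open>0 < D'\<close> by blast
  then show ?thesis
    by (rule lower_exps_mono) (use small pos in \<open>auto intro: less_imp_le\<close>)
qed

lemma beta_idx_eq_Sup_lower_exps:
  fixes f :: "real \<Rightarrow> real"
  assumes "\<And>x. x1 \<le> x \<Longrightarrow> 0 < f x"
  shows "beta_idx f = Sup (ereal ` lower_exps f)"
proof -
  have "beta_idx f = Sup (ereal ` beta_exps f)"
    unfolding beta_idx_def beta_exps_def by (simp add: setcompr_eq_image)
  also have "\<dots> = Sup (ereal ` lower_exps f)"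
    using lower_exps_subset_beta_exps diff_mem_lower_exps_if_mem_beta_exps assms
    by (intro Sup_ereal_image_eq_if_shifts[symmetric]) blast+
  finally show ?thesis .
qed

lemma Sup_ereal_le_inverse_Inf:
  fixes A B :: "real set"
  assumes A: "A \<subseteq> {0<..}"
    and B_to_A: "\<And>b. b \<in> B \<Longrightarrow> 0 < b \<Longrightarrow> \<exists>a\<in>A. a \<le> 1 / b"
  shows "Sup (ereal ` B) \<le> inverse (Inf (ereal ` A))"
proof (rule Sup_least)
  have "0 \<le> Inf (ereal ` A)" using A by (intro Inf_greatest) auto
  fix y assume "y \<in> ereal ` B"
  then obtain b where "b \<in> B" "y = ereal b" by auto
  show "y \<le> inverse (Inf (ereal ` A))"
  proof (cases "0 < b")
    case False
    then have "y \<le> 0" using \<open>y = ereal b\<close> by simp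
    also have "0 \<le> inverse (Inf (ereal ` A))" using \<open>0 \<le> Inf (ereal ` A)\<close> by (rule inverse_ereal_ge0I)
    finally show ?thesis .
  next
    case True
    obtain a where "a \<in> A" "a \<le> 1 / b" using B_to_A[OF \<open>b \<in> B\<close> True] by blast
    then have "Inf (ereal ` A) \<le> ereal (1 / b)" by (meson Inf_lower ereal_less_eq(3) image_eqI order_trans)
    then have "inverse (ereal (1 / b)) \<le> inverse (Inf (ereal ` A))"
      by (rule ereal_inverse_antimono[OF \<open>0 \<le> Inf (ereal ` A)\<close>])
    then show ?thesis using \<open>y = ereal b\<close> True by simp
  qed
qed

lemma inverse_Inf_ereal_le_Sup:
  fixes A B :: "real set"
  assumes A: "A \<subseteq> {0<..}" and "0 \<in> B"
    and A_to_B: "\<And>a g. a \<in> A \<Longrightarrow> 0 < g \<Longrightarrow> g < 1 / a \<Longrightarrow> \<exists>b\<in>B. g \<le> b"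
  shows "inverse (Inf (ereal ` A)) \<le> Sup (ereal ` B)"
proof (rule dense_le)
  fix y assume y: "y < inverse (Inf (ereal ` A))"
  show "y \<le> Sup (ereal ` B)"
  proof (cases "y \<le> 0")
    case True
    have "0 \<le> Sup (ereal ` B)" using \<open>0 \<in> B\<close> by (metis Sup_upper image_eqI zero_ereal_def)
    then show ?thesis using True by simp
  next
    case False
    with y obtain g where g: "y = ereal g" "0 < g" by (cases y) auto
    have "Inf (ereal ` A) < ereal (1 / g)"
    proof (rule ccontr)
      assume "\<not> Inf (ereal ` A) < ereal (1 / g)"
      then have "inverse (Inf (ereal ` A)) \<le> inverse (ereal (1 / g))"
        using g by (intro ereal_inverse_antimono) auto
      then show False using y g by simp
    qed
    then obtain a where "a \<in> A" "a < 1 / g" by (auto simp: Inf_less_iff)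
    then have "g < 1 / a" using A g by (auto simp: field_simps)
    then obtain b where "b \<in> B" "g \<le> b" using A_to_B[OF \<open>a \<in> A\<close> \<open>0 < g\<close>] by blast
    then show ?thesis using g by (auto intro: Sup_upper2)
  qed
qed

lemma Sup_ereal_eq_inverse_Inf:
  fixes A B :: "real set"
  assumes "A \<subseteq> {0<..}" "0 \<in> B"
    and "\<And>b. b \<in> B \<Longrightarrow> 0 < b \<Longrightarrow> \<exists>a\<in>A. a \<le> 1 / b"
    and "\<And>a g. a \<in> A \<Longrightarrow> 0 < g \<Longrightarrow> g < 1 / a \<Longrightarrow> \<exists>b\<in>B. g \<le> b"
  shows "Sup (ereal ` B) = inverse (Inf (ereal ` A))"
  using Sup_ereal_le_inverse_Inf[OF assms(1,3)] inverse_Inf_ereal_le_Sup[OF assms(1,2,4)]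
  by (rule antisym)

lemma Inf_ereal_eq_inverse_Sup:
  fixes A B :: "real set"
  assumes A: "A \<subseteq> {0<..}" and "0 \<in> B"
    and "\<And>b. b \<in> B \<Longrightarrow> 0 < b \<Longrightarrow> \<exists>a\<in>A. a \<le> 1 / b"
    and "\<And>a g. a \<in> A \<Longrightarrow> 0 < g \<Longrightarrow> g < 1 / a \<Longrightarrow> \<exists>b\<in>B. g \<le> b"
  shows "Inf (ereal ` A) = inverse (Sup (ereal ` B))"
proof -
  have "0 \<le> Inf (ereal ` A)" using A by (intro Inf_greatest) auto
  then have "Inf (ereal ` A) \<noteq> - \<infinity>" by auto
  with Sup_ereal_eq_inverse_Inf[OF assms] show ?thesis by simp
qed

lemma Sup_ereal_le_if_positive_subset:
  fixes X Y :: "real set"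
  assumes "0 \<in> Y" "\<And>b. b \<in> X \<Longrightarrow> 0 < b \<Longrightarrow> b \<in> Y"
  shows "Sup (ereal ` X) \<le> Sup (ereal ` Y)"
proof (rule Sup_least)
  fix y assume "y \<in> ereal ` X"
  then obtain b where b: "b \<in> X" "y = ereal b" by auto
  show "y \<le> Sup (ereal ` Y)"
  proof (cases "0 < b")
    case True
    then show ?thesis using b assms(2) by (auto intro: Sup_upper)
  next
    case False
    then have "y \<le> ereal 0" using b by simp
    also have "\<dots> \<le> Sup (ereal ` Y)" using assms(1) by (auto intro: Sup_upper)
    finally show ?thesis .
  qed
qed

section \<open>Exponents of monotone functions\<close>

lemma upper_exps_pos:
  fixes f :: "real \<Rightarrow> real"
  assumes pos: "\<And>x. x1 \<le> x \<Longrightarrow> 0 < f x"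
    and unbounded: "\<And>B z. \<exists>y\<ge>z. B < f y"
  shows "upper_exps f \<subseteq> {0<..}"
proof
  fix a assume "a \<in> upper_exps f"
  then obtain C x0 where "C > 0"
    and bound: "\<And>x l. x0 \<le> x \<Longrightarrow> 1 \<le> l \<Longrightarrow> f (l * x) \<le> C * l powr a * f x"
    unfolding upper_exps_def by blast
  show "a \<in> {0<..}"
  proof (rule ccontr)
    assume "a \<notin> {0<..}"
    define x where "x = max (max x0 x1) 1"
    obtain y where "x \<le> y" "C * f x < f y" using unbounded by blast
    have "1 \<le> x" "0 < f x" using pos unfolding x_def by auto
    then have "1 \<le> y / x" using \<open>x \<le> y\<close> by simp
    then have "f y \<le> C * (y / x) powr a * f x"
      using bound[of x "y / x"] \<open>1 \<le> x\<close> unfolding x_def by simp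
    also have "\<dots> \<le> C * 1 * f x"
      using \<open>C > 0\<close> \<open>0 < f x\<close> \<open>1 \<le> y / x\<close> \<open>a \<notin> {0<..}\<close> powr_mono[of a 0 "y / x"] \<open>1 \<le> x\<close> \<open>x \<le> y\<close>
      by (intro mult_right_mono mult_left_mono) auto
    finally show False using \<open>C * f x < f y\<close> by simp
  qed
qed

lemma nonpos_mem_lower_exps:
  fixes f :: "real \<Rightarrow> real"
  assumes pos: "\<And>x. x1 \<le> x \<Longrightarrow> 0 < f x"
    and mono: "\<And>x y. x1 \<le> x \<Longrightarrow> x \<le> y \<Longrightarrow> f x \<le> f y"
    and "b \<le> 0"
  shows "b \<in> lower_exps f"
proof -
  have "1 * l powr b * f x \<le> f (l * x)" if "max x1 1 \<le> x" "1 \<le> l" for x l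
  proof -
    have "1 * l powr b * f x \<le> f x"
      using that pos[of x] \<open>b \<le> 0\<close> powr_mono[of b 0 l] by (simp add: mult_left_le_one_le)
    also have "\<dots> \<le> f (l * x)" using mono[of x "l * x"] that by simp
    finally show ?thesis .
  qed
  then show ?thesis unfolding lower_exps_def using zero_less_one by blast
qed

lemma lower_exps_uniform_from_one:
  fixes f :: "real \<Rightarrow> real"
  assumes pos: "\<And>x. 1 \<le> x \<Longrightarrow> 0 < f x"
    and mono: "\<And>x y. 1 \<le> x \<Longrightarrow> x \<le> y \<Longrightarrow> f x \<le> f y"
    and "0 \<le> b" "b \<in> lower_exps f"
  obtains D where "0 < D" "\<And>x l. 1 \<le> x \<Longrightarrow> 1 \<le> l \<Longrightarrow> D * l powr b * f x \<le> f (l * x)"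
proof -
  obtain D x0' where "0 < D"
    and bound: "\<And>x l. x0' \<le> x \<Longrightarrow> 1 \<le> l \<Longrightarrow> D * l powr b * f x \<le> f (l * x)"
    using \<open>b \<in> lower_exps f\<close> unfolding lower_exps_def by blast
  define x0 where "x0 = max x0' 1"
  have "1 \<le> x0" unfolding x0_def by simp
  define D' where "D' = min D 1 * x0 powr (- b)"
  have "0 < D'" unfolding D'_def using \<open>0 < D\<close> \<open>1 \<le> x0\<close> by simp
  have "D' * l powr b * f x \<le> f (l * x)" if "1 \<le> x" "1 \<le> l" for x l
  proof -
    have D'_eq: "D' * l powr b = min D 1 * (l / x0) powr b"
      using that \<open>1 \<le> x0\<close> by (simp add: D'_def powr_divide powr_minus_divide)
    have "x \<le> l * x" using that by (simp add: mult_le_cancel_right1)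
    \<comment> \<open>Shift the base point up to \<open>y \<ge> x0\<close>; since \<open>y \<le> x0 x\<close> this costs at most the factor \<open>x0\<^sup>b\<close>.\<close>
    define y where "y = max x x0"
    have "x0' \<le> y" "x \<le> y" "y \<le> x0 * x"
      using that \<open>1 \<le> x0\<close> mult_right_mono[of 1 x0 x] mult_left_mono[of 1 x x0]
      by (auto simp: y_def x0_def)
    show ?thesis
    proof (cases "y \<le> l * x")
      case True
      define \<mu> where "\<mu> = l * x / y"
      have "0 < y" "1 \<le> \<mu>" using True \<open>1 \<le> x\<close> \<open>x \<le> y\<close> by (auto simp: \<mu>_def)
      have "l / x0 \<le> \<mu>"
        unfolding \<mu>_def using \<open>y \<le> x0 * x\<close> \<open>0 < y\<close> \<open>1 \<le> x0\<close> that by (simp add: field_simps mult_left_mono)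
      have "D' * l powr b * f x \<le> D * \<mu> powr b * f y"
        unfolding D'_eq using \<open>l / x0 \<le> \<mu>\<close> \<open>0 \<le> b\<close> \<open>0 < D\<close> pos[of x] mono[of x y] \<open>x \<le> y\<close> that \<open>1 \<le> x0\<close>
        by (intro mult_mono powr_mono2) auto
      also have "\<dots> \<le> f (\<mu> * y)" using bound[OF \<open>x0' \<le> y\<close> \<open>1 \<le> \<mu>\<close>] .
      also have "\<mu> * y = l * x" using \<open>0 < y\<close> by (simp add: \<mu>_def)
      finally show ?thesis .
    next
      case False
      then have "l * x < x0" using \<open>x \<le> l * x\<close> by (auto simp: y_def)
      moreover have "l * 1 \<le> l * x" using that by (intro mult_left_mono) auto
      ultimately have "l / x0 \<le> 1" using \<open>1 \<le> x0\<close> by simp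
      then have "D' * l powr b \<le> 1"
        unfolding D'_eq using \<open>0 \<le> b\<close> \<open>1 \<le> l\<close> \<open>1 \<le> x0\<close> by (intro mult_le_one powr_le1) auto
      then have "D' * l powr b * f x \<le> f x"
        using mult_right_mono[of "D' * l powr b" 1 "f x"] pos[OF \<open>1 \<le> x\<close>] by simp
      also have "\<dots> \<le> f (l * x)" using mono \<open>1 \<le> x\<close> \<open>x \<le> l * x\<close> by simp
      finally show ?thesis .
    qed
  qed
  with \<open>0 < D'\<close> show ?thesis by (rule that)
qed

lemma mem_lower_exps_if_bound_for_large:
  fixes f :: "real \<Rightarrow> real"
  assumes nonneg: "\<And>x. x0 \<le> x \<Longrightarrow> 0 \<le> f x"
    and mono: "\<And>x y. x0 \<le> x \<Longrightarrow> x \<le> y \<Longrightarrow> f x \<le> f y"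
    and "0 \<le> x0" "1 \<le> c" "0 \<le> b" "0 < D"
    and bound: "\<And>x l. x0 \<le> x \<Longrightarrow> c \<le> l \<Longrightarrow> D * l powr b * f x \<le> f (l * x)"
  shows "b \<in> lower_exps f"
proof -
  define D' where "D' = min D (c powr (- b))"
  have "0 < D'" unfolding D'_def using \<open>0 < D\<close> \<open>1 \<le> c\<close> by simp
  have "D' * l powr b * f x \<le> f (l * x)" if "x0 \<le> x" "1 \<le> l" for x l
  proof (cases "c \<le> l")
    case True
    have "D' * l powr b * f x \<le> D * l powr b * f x"
      unfolding D'_def using nonneg[OF \<open>x0 \<le> x\<close>] by (intro mult_right_mono) auto
    also have "\<dots> \<le> f (l * x)" using bound \<open>x0 \<le> x\<close> True by simp
    finally show ?thesis .
  next
    case False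
    have "D' * l powr b \<le> c powr (- b) * c powr b"
      unfolding D'_def using False \<open>0 \<le> b\<close> \<open>1 \<le> l\<close> by (intro mult_mono powr_mono2) auto
    also have "\<dots> = 1" using \<open>1 \<le> c\<close> by (simp add: powr_minus)
    finally have "D' * l powr b * f x \<le> f x"
      using mult_right_mono[of "D' * l powr b" 1 "f x"] nonneg[OF \<open>x0 \<le> x\<close>] by simp
    also have "\<dots> \<le> f (l * x)"
      using mono[of x "l * x"] that \<open>0 \<le> x0\<close> mult_right_mono[of 1 l x] by simp
    finally show ?thesis .
  qed
  then show ?thesis unfolding lower_exps_def using \<open>0 < D'\<close> by blast
qed

lemma mem_lower_exps_if_rescaled_bound:
  fixes f :: "real \<Rightarrow> real"
  assumes nonneg: "\<And>x. x0 \<le> x \<Longrightarrow> 0 \<le> f x"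
    and mono: "\<And>x y. x0 \<le> x \<Longrightarrow> x \<le> y \<Longrightarrow> f x \<le> f y"
    and "0 \<le> x0" "1 \<le> c" "0 \<le> b" "0 < D"
    and bound: "\<And>x l. x0 \<le> x \<Longrightarrow> 1 \<le> l \<Longrightarrow> D * l powr b * f x \<le> f (c * l * x)"
  shows "b \<in> lower_exps f"
proof (rule mem_lower_exps_if_bound_for_large[OF nonneg mono assms(3-5)])
  show "0 < D * c powr (- b)" using \<open>0 < D\<close> \<open>1 \<le> c\<close> by simp
  fix x l assume "x0 \<le> x" "c \<le> l"
  then have "D * (l / c) powr b * f x \<le> f (c * (l / c) * x)" using \<open>1 \<le> c\<close> by (intro bound) auto
  then show "D * c powr (- b) * l powr b * f x \<le> f (l * x)"
    using \<open>1 \<le> c\<close> \<open>c \<le> l\<close> by (simp add: powr_divide powr_minus_divide)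
qed

lemma exp_nat_mult_decomposition:
  fixes t t1 :: real
  assumes "0 < t1" "t1 \<le> t"
  obtains n v where "t = exp (real n) * v" "t1 \<le> v" "v < exp 1 * t1"
proof -
  define n where "n = nat \<lfloor>ln (t / t1)\<rfloor>"
  have "1 \<le> t / t1" using assms by simp
  then have "real n = of_int \<lfloor>ln (t / t1)\<rfloor>" unfolding n_def by simp
  then have "real n \<le> ln (t / t1)" "ln (t / t1) < real n + 1" by linarith+
  then have "exp (real n) \<le> t / t1" "t / t1 < exp (real n + 1)"
    using \<open>1 \<le> t / t1\<close> by (metis exp_le_cancel_iff exp_ln less_le_trans zero_less_one,
      metis exp_less_cancel_iff exp_ln less_le_trans zero_less_one)
  then have "t1 \<le> t / exp (real n)" "t / exp (real n) < exp 1 * t1"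
    using assms by (simp_all add: field_simps exp_add)
  then show ?thesis by (intro that[of n "t / exp (real n)"]) simp_all
qed

lemma mem_upper_exps_if_exp_power_bound:
  fixes f :: "real \<Rightarrow> real"
  assumes nonneg: "\<And>x. x0 \<le> x \<Longrightarrow> 0 \<le> f x"
    and mono: "\<And>x y. x0 \<le> x \<Longrightarrow> x \<le> y \<Longrightarrow> f x \<le> f y"
    and "0 \<le> x0" "0 \<le> a" "0 < K"
    and bound: "\<And>x n. x0 \<le> x \<Longrightarrow> f (exp (real n) * x) \<le> K * exp (a * real n) * f x"
  shows "a \<in> upper_exps f"
proof -
  have "f (l * x) \<le> K * exp a * l powr a * f x" if "x0 \<le> x" "1 \<le> l" for x l
  proof -
    obtain n v where "l = exp (real n) * v" "1 \<le> v" "v < exp 1"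
      by (rule exp_nat_mult_decomposition[of 1 l]) (use \<open>1 \<le> l\<close> in auto)
    then have "exp (real n) \<le> l" "l \<le> exp (real (Suc n))" by (simp_all add: exp_add)
    have "f (l * x) \<le> f (exp (real (Suc n)) * x)"
      using that \<open>0 \<le> x0\<close> \<open>l \<le> exp (real (Suc n))\<close> mult_right_mono[of 1 l x]
      by (intro mono mult_right_mono) auto
    also have "\<dots> \<le> K * exp (a * real (Suc n)) * f x" using bound that by blast
    also have "\<dots> \<le> K * (exp a * l powr a) * f x"
    proof -
      have "exp (a * real (Suc n)) = exp a * exp (real n) powr a"
        by (simp add: powr_def exp_add[symmetric] algebra_simps)
      also have "\<dots> \<le> exp a * l powr a"
        using \<open>exp (real n) \<le> l\<close> \<open>0 \<le> a\<close> by (intro mult_left_mono powr_mono2) auto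
      finally show ?thesis
        using nonneg[OF \<open>x0 \<le> x\<close>] \<open>0 < K\<close> by (intro mult_right_mono mult_left_mono) auto
    qed
    finally show ?thesis by (simp add: mult.assoc)
  qed
  moreover have "0 < K * exp a" using \<open>0 < K\<close> by simp
  ultimately show ?thesis unfolding upper_exps_def by blast
qed

section \<open>Property (P) of a function and its index gamma\<close>

lemma P_fun_if_upper_exp:
  fixes \<sigma> :: "real \<Rightarrow> real"
  assumes pos: "\<And>x. x1 \<le> x \<Longrightarrow> 0 < \<sigma> x"
    and "a \<in> upper_exps \<sigma>" "0 < g" "g * a < 1"
  shows "P_fun \<sigma> g"
proof -
  obtain C x0 where "C > 0"
    and bound: "\<And>x l. x0 \<le> x \<Longrightarrow> 1 \<le> l \<Longrightarrow> \<sigma> (l * x) \<le> C * l powr a * \<sigma> x"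
    using \<open>a \<in> upper_exps \<sigma>\<close> unfolding upper_exps_def by blast
  define e where "e = 1 - g * a"
  have "0 < e" unfolding e_def using \<open>g * a < 1\<close> by simp
  define K where "K = max 2 ((C + 1) powr (1 / e))"
  have "1 < K" unfolding K_def by simp
  have "C + 1 = ((C + 1) powr (1 / e)) powr e" using \<open>0 < e\<close> \<open>C > 0\<close> by (simp add: powr_powr)
  also have "\<dots> \<le> K powr e" unfolding K_def using \<open>0 < e\<close> by (intro powr_mono2) auto
  finally have "C + 1 \<le> K powr e" .
  have "C * K powr (g * a) < (C + 1) * K powr (g * a)" using \<open>1 < K\<close> by simp
  also have "\<dots> \<le> K powr e * K powr (g * a)" using \<open>C + 1 \<le> K powr e\<close> by (intro mult_right_mono) auto
  also have "\<dots> = K" using \<open>1 < K\<close> unfolding e_def by (simp add: powr_add[symmetric])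
  finally have "C * K powr (g * a) < K" .
  have "ereal (\<sigma> (K powr g * t) / \<sigma> t) \<le> ereal (C * K powr (g * a))" if "max x0 x1 \<le> t" for t
  proof -
    have "\<sigma> (K powr g * t) \<le> C * (K powr g) powr a * \<sigma> t"
      using bound that \<open>1 < K\<close> \<open>0 < g\<close> by (simp add: ge_one_powr_ge_zero)
    then show ?thesis using pos[of t] that by (simp add: powr_powr divide_le_eq)
  qed
  then have "eventually (\<lambda>t. ereal (\<sigma> (K powr g * t) / \<sigma> t) \<le> ereal (C * K powr (g * a))) at_top"
    unfolding eventually_at_top_linorder by blast
  then have "Limsup at_top (\<lambda>t. ereal (\<sigma> (K powr g * t) / \<sigma> t)) \<le> ereal (C * K powr (g * a))"
    by (rule Limsup_bounded)
  also have "\<dots> < ereal K" using \<open>C * K powr (g * a) < K\<close> by simp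
  finally show ?thesis unfolding P_fun_def using \<open>1 < K\<close> by blast
qed

lemma inverse_mem_upper_exps_if_P_fun:
  fixes \<sigma> :: "real \<Rightarrow> real"
  assumes pos: "\<And>x. x1 \<le> x \<Longrightarrow> 0 < \<sigma> x"
    and mono: "\<And>x y. x1 \<le> x \<Longrightarrow> x \<le> y \<Longrightarrow> \<sigma> x \<le> \<sigma> y"
    and "0 < g" "P_fun \<sigma> g"
  shows "1 / g \<in> upper_exps \<sigma>"
proof -
  obtain K where "1 < K" and "Limsup at_top (\<lambda>t. ereal (\<sigma> (K powr g * t) / \<sigma> t)) < ereal K"
    using \<open>P_fun \<sigma> g\<close> unfolding P_fun_def by blast
  from Limsup_lessD[OF this(2)] obtain t2 where t2: "\<And>t. t2 \<le> t \<Longrightarrow> \<sigma> (K powr g * t) / \<sigma> t < K"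
    unfolding eventually_at_top_linorder by auto
  define t0 where "t0 = max (max x1 t2) 0"
  have "1 < K powr g" using \<open>1 < K\<close> \<open>0 < g\<close> by simp
  \<comment> \<open>Monotonicity turns the single step from \<open>t\<close> to \<open>K\<^sup>g t\<close> into a bound with exponent 0 on \<open>[1, K\<^sup>g]\<close>.\<close>
  have local: "\<sigma> (l * t) \<le> K * l powr 0 * \<sigma> t" if "t0 \<le> t" "1 \<le> l" "l \<le> K powr g" for t l
  proof -
    have "\<sigma> (l * t) \<le> \<sigma> (K powr g * t)"
      using that mono[of "l * t" "K powr g * t"] mult_right_mono[of 1 l t]
      by (auto simp: t0_def intro: mult_right_mono)
    also have "\<dots> < K * \<sigma> t" using t2[of t] pos[of t] that by (simp add: t0_def divide_less_eq)
    finally show ?thesis using that by simp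
  qed
  have "\<sigma> (l * t) \<le> K * l powr (0 + ln K / ln (K powr g)) * \<sigma> t" if "t0 \<le> t" "1 \<le> l" for t l
    by (rule powr_bound_extend[OF _ \<open>1 < K powr g\<close> _ _ local that])
      (use pos \<open>1 < K\<close> in \<open>auto simp: t0_def less_imp_le\<close>)
  moreover have "ln K / ln (K powr g) = 1 / g" using \<open>1 < K\<close> \<open>0 < g\<close> by simp
  ultimately show ?thesis unfolding upper_exps_def using \<open>1 < K\<close> by (intro CollectI exI[of _ K]) auto
qed

lemma gamma_fun_eq_inverse_Inf_upper_exps:
  fixes \<sigma> :: "real \<Rightarrow> real"
  assumes pos: "\<And>x. x1 \<le> x \<Longrightarrow> 0 < \<sigma> x"
    and mono: "\<And>x y. x1 \<le> x \<Longrightarrow> x \<le> y \<Longrightarrow> \<sigma> x \<le> \<sigma> y"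
    and unbounded: "\<And>B z. \<exists>y\<ge>z. B < \<sigma> y"
  shows "gamma_fun \<sigma> = inverse (Inf (ereal ` upper_exps \<sigma>))"
proof -
  define P where "P = {g. 0 < g \<and> P_fun \<sigma> g}"
  have "gamma_fun \<sigma> = Sup (ereal ` insert 0 P)"
  proof (cases "P = {}")
    case False
    then obtain g where "g \<in> P" by blast
    then have "0 \<le> Sup (ereal ` P)" unfolding P_def by (auto intro: Sup_upper2)
    moreover have "{ereal g | g. 0 < g \<and> P_fun \<sigma> g} = ereal ` P" unfolding P_def by auto
    ultimately show ?thesis using False unfolding gamma_fun_def P_def[symmetric]
      by (simp add: zero_ereal_def[symmetric] sup_absorb2)
  qed (simp add: gamma_fun_def P_def[symmetric] zero_ereal_def)
  also have "\<dots> = inverse (Inf (ereal ` upper_exps \<sigma>))"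
  proof (rule Sup_ereal_eq_inverse_Inf)
    show "upper_exps \<sigma> \<subseteq> {0<..}" by (rule upper_exps_pos[OF pos unbounded])
    fix b assume "b \<in> insert 0 P" "0 < b"
    then show "\<exists>a\<in>upper_exps \<sigma>. a \<le> 1 / b"
      using inverse_mem_upper_exps_if_P_fun[OF pos mono] unfolding P_def by auto
  next
    fix a g assume "a \<in> upper_exps \<sigma>" "0 < g" "g < 1 / a"
    moreover have "0 < a" using upper_exps_pos[OF pos unbounded] \<open>a \<in> upper_exps \<sigma>\<close> by auto
    ultimately have "g \<in> P" unfolding P_def using P_fun_if_upper_exp[OF pos] by (auto simp: field_simps)
    then show "\<exists>b\<in>insert 0 P. g \<le> b" by blast
  qed simp
  finally show ?thesis .
qed

lemma mult_powr_le_imp_le_powr_inverse: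
  fixes b D \<mu> l :: real
  assumes "0 < b" "0 < D" "0 \<le> \<mu>" "0 < l" "D * \<mu> powr b \<le> l"
  shows "\<mu> \<le> D powr (- 1 / b) * l powr (1 / b)"
proof -
  have "\<mu> powr b \<le> l / D" using assms by (simp add: field_simps)
  then have "(\<mu> powr b) powr (1 / b) \<le> (l / D) powr (1 / b)" using assms by (intro powr_mono2) auto
  then show ?thesis
    using assms by (simp add: powr_powr powr_divide powr_minus_divide divide_simps)
qed

lemma le_mult_powr_imp_powr_inverse_le:
  fixes b D \<mu> l :: real
  assumes "0 < b" "0 < D" "0 \<le> \<mu>" "0 < l" "l \<le> D * \<mu> powr b"
  shows "D powr (- 1 / b) * l powr (1 / b) \<le> \<mu>"
proof -
  have "l / D \<le> \<mu> powr b" using assms by (simp add: field_simps)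
  then have "(l / D) powr (1 / b) \<le> (\<mu> powr b) powr (1 / b)" using assms by (intro powr_mono2) auto
  then show ?thesis
    using assms by (simp add: powr_powr powr_divide powr_minus_divide divide_simps)
qed

section \<open>Weight sequences\<close>

definition almost_increasing :: "(nat \<Rightarrow> real) \<Rightarrow> bool" where
  "almost_increasing r \<longleftrightarrow> (\<exists>D>0. \<forall>p q. p \<le> q \<longrightarrow> D * r p \<le> r q)"

lemma P_seq_iff_almost_increasing:
  assumes quot_pos: "\<And>p. 0 < quot M p"
  shows "P_seq M g \<longleftrightarrow> almost_increasing (\<lambda>p. quot M p / (real p + 1) powr g)"
    (is "_ \<longleftrightarrow> almost_increasing ?r")
proof
  assume "P_seq M g"
  then obtain l c where "1 \<le> c" and l: "\<And>p. quot M p / c \<le> l p \<and> l p \<le> c * quot M p"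
    and "mono (\<lambda>p. l p / (real p + 1) powr g)"
    unfolding P_seq_def by blast
  have "1 / (c * c) * ?r p \<le> ?r q" if "p \<le> q" for p q
  proof -
    have "?r p / c \<le> l p / (real p + 1) powr g"
      using l[of p] by (simp add: divide_right_mono field_simps)
    also have "\<dots> \<le> l q / (real q + 1) powr g" using \<open>mono _\<close> \<open>p \<le> q\<close> by (simp add: mono_def)
    also have "\<dots> \<le> c * ?r q" using l[of q] by (simp add: divide_right_mono field_simps)
    finally show ?thesis using \<open>1 \<le> c\<close> by (simp add: field_simps)
  qed
  moreover have "0 < 1 / (c * c)" using \<open>1 \<le> c\<close> by simp
  ultimately show "almost_increasing ?r" unfolding almost_increasing_def by blast
next
  assume "almost_increasing ?r"
  then obtain D where "0 < D" and D: "\<And>p q. p \<le> q \<Longrightarrow> D * ?r p \<le> ?r q"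
    unfolding almost_increasing_def by blast
  \<comment> \<open>The required nondecreasing quotient is the running infimum of \<open>?r\<close>.\<close>
  define I where "I p = Inf (?r ` {p..})" for p
  have bdd: "bdd_below (?r ` {p..})" for p
    using quot_pos by (intro bdd_belowI[of _ 0]) (auto intro: less_imp_le)
  have I_le: "I p \<le> ?r p" for p unfolding I_def using bdd by (intro cInf_lower) auto
  have I_ge: "D * ?r p \<le> I p" for p unfolding I_def using D by (intro cINF_greatest) auto
  have "mono I" unfolding I_def mono_def using bdd by (intro allI impI cInf_superset_mono) auto
  define l where "l p = (real p + 1) powr g * I p" for p
  define c where "c = max 1 (1 / D)"
  have "quot M p / c \<le> l p \<and> l p \<le> c * quot M p" for p
  proof
    have "1 / c \<le> 1 / (1 / D)" unfolding c_def using \<open>0 < D\<close> by (intro divide_left_mono) auto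
    then have "1 / c \<le> D" by simp
    then have "quot M p / c \<le> (real p + 1) powr g * (D * ?r p)"
      using quot_pos[of p] by (simp add: divide_le_eq mult_left_mono mult.commute)
    also have "\<dots> \<le> l p" unfolding l_def using I_ge by (intro mult_left_mono) auto
    finally show "quot M p / c \<le> l p" .
    have "l p \<le> (real p + 1) powr g * ?r p" unfolding l_def using I_le by (intro mult_left_mono) auto
    also have "\<dots> \<le> c * quot M p" using quot_pos[of p] by (simp add: c_def)
    finally show "l p \<le> c * quot M p" .
  qed
  moreover have "mono (\<lambda>p. l p / (real p + 1) powr g)" using \<open>mono I\<close> by (simp add: l_def)
  moreover have "1 \<le> c" unfolding c_def by simp
  ultimately show "P_seq M g" unfolding P_seq_def by blast
qed

locale weight_sequence =
  fixes M :: "nat \<Rightarrow> real"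
  assumes weight_seq: "weight_seq M"
begin

abbreviation m where "m \<equiv> quot M"
abbreviation \<nu> where "\<nu> \<equiv> nu_c m"
abbreviation \<omega> where "\<omega> \<equiv> omega_w M"
abbreviation s where "s \<equiv> step_fun m"

lemma M_0: "M 0 = 1" and M_pos: "0 < M p"
  using weight_seq unfolding weight_seq_def by auto

lemma quot_pos: "0 < m p"
  unfolding quot_def using M_pos[of p] M_pos[of "Suc p"] by simp

lemma M_Suc: "M (Suc p) = m p * M p"
  unfolding quot_def using M_pos[of p] by simp

lemma quot_le_quot_Suc: "m p \<le> m (Suc p)"
proof -
  have "(M (Suc p))\<^sup>2 \<le> M p * M (Suc (Suc p))"
    using weight_seq unfolding weight_seq_def by (metis Suc_eq_plus1 diff_Suc_1 le_add2)
  then have "(m p * M p) * (m p * M p) \<le> (m (Suc p) * M p) * (m p * M p)"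
    by (simp add: M_Suc power2_eq_square mult_ac)
  then show ?thesis using quot_pos[of p] M_pos[of p] by simp
qed

lemma quot_mono: "i \<le> j \<Longrightarrow> m i \<le> m j"
  using quot_le_quot_Suc by (rule lift_Suc_mono_le)

lemma quot_unbounded: "\<exists>j. t < m j"
proof (rule ccontr)
  assume "\<nexists>j. t < m j"
  then have bounded: "m j \<le> t" for j by (simp add: not_less)
  then have "0 < t" using quot_pos[of 0] by (meson less_le_trans)
  have M_le: "M p \<le> t ^ p" for p
  proof (induction p)
    case (Suc p)
    then show ?case
      using bounded[of p] M_pos[of p] quot_pos[of p] by (simp add: M_Suc mult_mono)
  qed (simp add: M_0)
  have "filterlim (\<lambda>p. root p (M p)) at_top sequentially"
    using weight_seq unfolding weight_seq_def by simp
  then have "\<forall>\<^sub>F p in sequentially. t < root p (M p)"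
    unfolding filterlim_at_top_dense by blast
  moreover have "\<forall>\<^sub>F p in sequentially. 0 < p" by (rule eventually_gt_at_top)
  ultimately have "\<forall>\<^sub>F p in sequentially. t < root p (M p) \<and> 0 < p" by (rule eventually_conj)
  then obtain p where "t < root p (M p)" "0 < p"
    unfolding eventually_sequentially by blast
  moreover have "root p (M p) \<le> t"
    using real_root_le_mono[OF \<open>0 < p\<close> M_le[of p]] \<open>0 < p\<close> \<open>0 < t\<close> by (simp add: real_root_pos2)
  ultimately show False by simp
qed

definition cnt :: "real \<Rightarrow> nat" where
  "cnt t = card {j. m j \<le> t}"

lemma quot_le_iff_less_cnt: "m j \<le> t \<longleftrightarrow> j < cnt t"
proof -
  define N where "N = (LEAST j. t < m j)"
  have "t < m N" unfolding N_def using quot_unbounded by (rule LeastI_ex)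
  have "{j. m j \<le> t} = {..<N}"
  proof (intro set_eqI iffI)
    fix j assume "j \<in> {j. m j \<le> t}"
    then show "j \<in> {..<N}" using \<open>t < m N\<close> quot_mono[of N j] by (cases "N \<le> j") auto
  next
    fix j assume "j \<in> {..<N}"
    then show "j \<in> {j. m j \<le> t}" unfolding N_def using not_less_Least by fastforce
  qed
  moreover from this have "cnt t = N" unfolding cnt_def by simp
  ultimately show ?thesis by blast
qed

lemma nu_eq_cnt: "\<nu> t = real (cnt t)"
  unfolding nu_c_def cnt_def by simp

lemma cnt_mono: "t \<le> t' \<Longrightarrow> cnt t \<le> cnt t'"
  using quot_le_iff_less_cnt by (metis leI order.trans less_irrefl_nat)

lemma Suc_le_cnt: "m k \<le> t \<Longrightarrow> Suc k \<le> cnt t"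
  by (simp add: quot_le_iff_less_cnt Suc_le_eq)

lemma nu_mono: "t \<le> t' \<Longrightarrow> \<nu> t \<le> \<nu> t'"
  by (simp add: nu_eq_cnt cnt_mono)

lemma nu_pos: "m 0 \<le> t \<Longrightarrow> 0 < \<nu> t"
  using Suc_le_cnt[of 0 t] by (simp add: nu_eq_cnt)

lemma nu_unbounded: "\<exists>y\<ge>z. B < \<nu> y"
proof -
  obtain k :: nat where "B < real k" using reals_Archimedean2 by blast
  moreover have "Suc k \<le> cnt (max z (m k))" by (intro Suc_le_cnt) simp
  ultimately show ?thesis by (intro exI[of _ "max z (m k)"]) (simp add: nu_eq_cnt)
qed

definition log_term :: "real \<Rightarrow> nat \<Rightarrow> real" where
  "log_term t p = real p * ln t - ln (M p)"

lemma log_term_Suc: "log_term t (Suc p) = log_term t p + ln t - ln (m p)"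
  unfolding log_term_def M_Suc using quot_pos[of p] M_pos[of p] by (simp add: ln_mult algebra_simps)

\<comment> \<open>The terms increase while \<open>m\<^sub>p \<le> t\<close> and decrease afterwards, so the supremum is attained at \<open>cnt t\<close>.\<close>
lemma log_term_le_cnt:
  assumes "0 < t"
  shows "log_term t p \<le> log_term t (cnt t)"
proof (cases "p \<le> cnt t")
  case True
  have "log_term t p \<le> log_term t (p + d)" if "p + d \<le> cnt t" for d
    using that
  proof (induction d)
    case (Suc d)
    then have "log_term t (p + d) \<le> log_term t (Suc (p + d))"
      using quot_le_iff_less_cnt[of "p + d" t] quot_pos assms by (simp add: log_term_Suc)
    with Suc show ?case by simp
  qed simp
  from this[of "cnt t - p"] True show ?thesis by simp
next
  case False
  have "log_term t (cnt t + d) \<le> log_term t (cnt t)" for d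
  proof (induction d)
    case (Suc d)
    have "log_term t (Suc (cnt t + d)) \<le> log_term t (cnt t + d)"
      using quot_le_iff_less_cnt[of "cnt t + d" t] quot_pos assms by (simp add: log_term_Suc)
    with Suc show ?case by simp
  qed simp
  from this[of "p - cnt t"] False show ?thesis by simp
qed

lemma omega_eq_log_term:
  assumes "0 < t"
  shows "\<omega> t = log_term t (cnt t)"
proof -
  have "ln (t ^ p / M p) = log_term t p" for p
    unfolding log_term_def using assms M_pos[of p] by (simp add: ln_div ln_realpow)
  then have "\<omega> t = Sup (range (log_term t))" unfolding omega_w_def using assms by simp
  also have "\<dots> = log_term t (cnt t)" using log_term_le_cnt[OF assms] by (intro cSup_eq_maximum) auto
  finally show ?thesis .
qed

lemma log_term_le_omega: "0 < t \<Longrightarrow> log_term t p \<le> \<omega> t"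
  using omega_eq_log_term log_term_le_cnt by simp

lemma omega_nonneg: "0 < t \<Longrightarrow> 0 \<le> \<omega> t"
  using log_term_le_omega[of t 0] by (simp add: log_term_def M_0)

lemma log_term_mult: "0 < H \<Longrightarrow> 0 < t \<Longrightarrow> log_term (H * t) p = real p * ln H + log_term t p"
  unfolding log_term_def by (simp add: ln_mult algebra_simps)

lemma nu_plus_omega_le_omega_exp: "0 < t \<Longrightarrow> \<nu> t + \<omega> t \<le> \<omega> (exp 1 * t)"
  using log_term_le_omega[of "exp 1 * t" "cnt t"] log_term_mult[of "exp 1" t "cnt t"] omega_eq_log_term[of t]
  by (simp add: nu_eq_cnt)

lemma nu_le_omega_exp: "0 < t \<Longrightarrow> \<nu> t \<le> \<omega> (exp 1 * t)"
  using nu_plus_omega_le_omega_exp omega_nonneg by fastforce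

lemma omega_mult_le: "1 \<le> H \<Longrightarrow> 0 < t \<Longrightarrow> \<omega> (H * t) \<le> \<nu> (H * t) * ln H + \<omega> t"
  using omega_eq_log_term[of "H * t"] log_term_mult[of H t "cnt (H * t)"] log_term_le_omega[of t "cnt (H * t)"]
  by (simp add: nu_eq_cnt)

lemma omega_mono:
  assumes "0 < t" "t \<le> t'"
  shows "\<omega> t \<le> \<omega> t'"
proof -
  have "log_term t (cnt t) \<le> log_term t' (cnt t)"
    unfolding log_term_def using assms by (simp add: mult_left_mono)
  then show ?thesis using omega_eq_log_term[of t] log_term_le_omega[of t' "cnt t"] assms by simp
qed

lemma ln_le_omega: "0 < t \<Longrightarrow> ln t - ln (m 0) \<le> \<omega> t"
  using log_term_le_omega[of t 1] by (simp add: log_term_def M_Suc M_0)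

lemma omega_pos:
  assumes "2 * m 0 \<le> t"
  shows "0 < \<omega> t"
proof -
  have "0 < m 0" "m 0 < t" using quot_pos[of 0] assms by auto
  then have "ln (m 0) < ln t" by simp
  with ln_le_omega[of t] \<open>m 0 < t\<close> \<open>0 < m 0\<close> show ?thesis by linarith
qed

lemma omega_mono_above: "2 * m 0 \<le> t \<Longrightarrow> t \<le> t' \<Longrightarrow> \<omega> t \<le> \<omega> t'"
  using omega_mono quot_pos[of 0] by simp

lemma omega_unbounded: "\<exists>y\<ge>z. B < \<omega> y"
proof -
  define y where "y = max z (m 0 * exp (B + 1))"
  have "0 < m 0" by (rule quot_pos)
  then have "0 < m 0 * exp (B + 1)" by simp
  moreover have "m 0 * exp (B + 1) \<le> y" unfolding y_def by simp
  ultimately have "0 < y" "ln (m 0 * exp (B + 1)) \<le> ln y" by auto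
  then have "B < \<omega> y" using ln_le_omega[OF \<open>0 < y\<close>] \<open>0 < m 0\<close> by (simp add: ln_mult)
  then show ?thesis unfolding y_def by (intro exI[of _ y]) (simp add: y_def)
qed

lemma omega_doubling_if_moderate_growth:
  assumes "moderate_growth M"
  obtains H where "exp 1 \<le> H" "\<And>t. 0 < t \<Longrightarrow> 2 * \<omega> t \<le> \<omega> (H * t)"
proof -
  obtain A where "0 < A" and A: "\<And>p q. M (p + q) \<le> A ^ (p + q) * M p * M q"
    using assms unfolding moderate_growth_def by blast
  define H where "H = max A (exp 1)"
  have "0 < H" unfolding H_def by (simp add: less_max_iff_disj)
  have "2 * \<omega> t \<le> \<omega> (H * t)" if "0 < t" for t
  proof -
    let ?p = "cnt t"
    have "M (2 * ?p) \<le> A ^ (2 * ?p) * (M ?p * M ?p)"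
      using A[of ?p ?p] by (simp add: mult_2 mult.assoc)
    also have "\<dots> \<le> H ^ (2 * ?p) * (M ?p * M ?p)"
      using \<open>0 < A\<close> M_pos[of ?p] unfolding H_def by (intro mult_right_mono power_mono) auto
    finally have "M (2 * ?p) \<le> H ^ (2 * ?p) * (M ?p * M ?p)" .
    then have "ln (M (2 * ?p)) \<le> ln (H ^ (2 * ?p) * (M ?p * M ?p))"
      using M_pos[of "2 * ?p"] by simp
    also have "\<dots> = real (2 * ?p) * ln H + 2 * ln (M ?p)"
      using \<open>0 < H\<close> M_pos[of ?p] by (simp add: ln_mult ln_realpow)
    finally have "2 * log_term t ?p \<le> log_term (H * t) (2 * ?p)"
      unfolding log_term_def using \<open>0 < H\<close> that by (simp add: ln_mult algebra_simps)
    also have "\<dots> \<le> \<omega> (H * t)" using \<open>0 < H\<close> that by (intro log_term_le_omega) simp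
    finally show ?thesis using omega_eq_log_term[OF that] by simp
  qed
  then show ?thesis using that[of H] unfolding H_def by simp
qed

lemma step_le_iff:
  assumes "1 \<le> x"
  shows "s x \<le> t \<longleftrightarrow> x < real (cnt t) + 1"
proof -
  have "s x \<le> t \<longleftrightarrow> nat \<lfloor>x\<rfloor> - 1 < cnt t"
    unfolding step_fun_def by (rule quot_le_iff_less_cnt)
  also have "\<dots> \<longleftrightarrow> \<lfloor>x\<rfloor> \<le> int (cnt t)" using assms by linarith
  also have "\<dots> \<longleftrightarrow> x < real (cnt t) + 1" by (simp add: floor_le_iff)
  finally show ?thesis .
qed

lemma step_of_nat: "s (real k + 1) = m k"
proof -
  have "\<lfloor>real k + 1\<rfloor> = int k + 1" by linarith
  then have "nat \<lfloor>real k + 1\<rfloor> - 1 = k" by simp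
  then show ?thesis unfolding step_fun_def by simp
qed

lemma step_pos: "0 < s x"
  unfolding step_fun_def by (rule quot_pos)

lemma step_mono: "x \<le> y \<Longrightarrow> s x \<le> s y"
  unfolding step_fun_def by (intro quot_mono) (simp add: floor_mono nat_mono diff_le_mono)

lemma step_unbounded: "\<exists>y\<ge>z. B < s y"
proof -
  obtain j where "B < m j" using quot_unbounded by blast
  moreover have "m j \<le> s (max z (real j + 1))"
    using step_mono[of "real j + 1"] step_of_nat[of j] by simp
  ultimately show ?thesis by (intro exI[of _ "max z (real j + 1)"]) auto
qed

lemma lower_exp_step_if_almost_increasing:
  assumes "almost_increasing (\<lambda>p. m p / (real p + 1) powr g)"
  shows "g \<in> lower_exps s"
proof (cases "g \<le> 0")
  case True
  then show ?thesis by (intro nonpos_mem_lower_exps[of 0]) (auto intro: step_pos step_mono)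
next
  case False
  obtain D where "0 < D" and D: "\<And>p q. p \<le> q \<Longrightarrow> D * (m p / (real p + 1) powr g) \<le> m q / (real q + 1) powr g"
    using assms unfolding almost_increasing_def by blast
  have "D / 2 powr g * \<mu> powr g * s x \<le> s (\<mu> * x)" if "1 \<le> x" "1 \<le> \<mu>" for x \<mu>
  proof -
    define p where "p = nat \<lfloor>x\<rfloor> - 1"
    define q where "q = nat \<lfloor>\<mu> * x\<rfloor> - 1"
    have "x \<le> \<mu> * x" using that by (simp add: mult_le_cancel_right1)
    have "real p + 1 \<le> x" "\<mu> * x / 2 \<le> real q + 1" "p \<le> q"
      using that \<open>x \<le> \<mu> * x\<close> unfolding p_def q_def by (linarith, linarith, simp add: floor_mono nat_mono diff_le_mono)
    have "\<mu> / 2 \<le> (real q + 1) / (real p + 1)"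
    proof -
      have "\<mu> / 2 = (\<mu> * x / 2) / x" using that by simp
      also have "\<dots> \<le> (real q + 1) / (real p + 1)"
        using \<open>real p + 1 \<le> x\<close> \<open>\<mu> * x / 2 \<le> real q + 1\<close> by (intro frac_le) auto
      finally show ?thesis .
    qed
    then have "(\<mu> / 2) powr g \<le> ((real q + 1) / (real p + 1)) powr g"
      using that False by (intro powr_mono2) auto
    then have "D * (\<mu> / 2) powr g * m p \<le> D * ((real q + 1) / (real p + 1)) powr g * m p"
      using \<open>0 < D\<close> quot_pos[of p] by (intro mult_right_mono mult_left_mono) auto
    also have "\<dots> \<le> m q" using D[OF \<open>p \<le> q\<close>] by (simp add: powr_divide field_simps)
    finally show ?thesis using that by (simp add: p_def q_def step_fun_def powr_divide)
  qed
  moreover have "0 < D / 2 powr g" using \<open>0 < D\<close> by simp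
  ultimately show ?thesis unfolding lower_exps_def by blast
qed

lemma almost_increasing_if_lower_exp_step:
  assumes "g \<in> lower_exps s"
  shows "almost_increasing (\<lambda>p. m p / (real p + 1) powr g)"
proof (cases "g \<le> 0")
  case True
  have "1 * (m p / (real p + 1) powr g) \<le> m q / (real q + 1) powr g" if "p \<le> q" for p q
    using that True quot_mono[OF that] quot_pos[of p] by (simp add: frac_le powr_mono2')
  then show ?thesis unfolding almost_increasing_def using zero_less_one by blast
next
  case False
  then obtain D where "0 < D" and D: "\<And>x \<mu>. 1 \<le> x \<Longrightarrow> 1 \<le> \<mu> \<Longrightarrow> D * \<mu> powr g * s x \<le> s (\<mu> * x)"
    using lower_exps_uniform_from_one[of s] step_pos step_mono assms by (metis linorder_not_le less_imp_le)
  have "D * (m p / (real p + 1) powr g) \<le> m q / (real q + 1) powr g" if "p \<le> q" for p q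
  proof -
    define \<mu> where "\<mu> = (real q + 1) / (real p + 1)"
    have "1 \<le> \<mu>" unfolding \<mu>_def using that by simp
    then have "D * \<mu> powr g * m p \<le> m q"
      using D[of "real p + 1" \<mu>] by (simp add: \<mu>_def step_of_nat)
    then show ?thesis by (simp add: \<mu>_def powr_divide field_simps)
  qed
  then show ?thesis unfolding almost_increasing_def using \<open>0 < D\<close> by blast
qed

lemma gamma_seq_eq_Sup_lower_exps_step: "gamma_seq M = Sup (ereal ` lower_exps s)"
proof -
  have "{g. P_seq M g} = lower_exps s"
    using P_seq_iff_almost_increasing[OF quot_pos] lower_exp_step_if_almost_increasing
      almost_increasing_if_lower_exp_step by blast
  then show ?thesis unfolding gamma_seq_def by (simp add: setcompr_eq_image)
qed

section \<open>The step function and the counting function are inverse\<close>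

lemma less_step_Suc_cnt: "t < s (real (cnt t) + 1)"
  using step_le_iff[of "real (cnt t) + 1" t] by simp

lemma step_cnt_le: "1 \<le> cnt t \<Longrightarrow> s (real (cnt t)) \<le> t"
  using step_le_iff[of "real (cnt t)" t] by simp

lemma cnt_less_if_less_step: "1 \<le> x \<Longrightarrow> t < s x \<Longrightarrow> real (cnt t) < x"
  using step_le_iff[of x t] by simp

lemma less_Suc_cnt_step: "1 \<le> x \<Longrightarrow> x < real (cnt (s x)) + 1"
  using step_le_iff[of x "s x"] by simp

lemma upper_exps_step_pos: "upper_exps s \<subseteq> {0<..}"
  by (rule upper_exps_pos[of 0]) (auto intro: step_pos step_unbounded)

lemma upper_exps_nu_pos: "upper_exps \<nu> \<subseteq> {0<..}"
  by (rule upper_exps_pos[of "m 0"]) (auto intro: nu_pos nu_unbounded)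

lemma inverse_mem_upper_exps_nu_if_lower_exp_step:
  assumes "0 < b" "b \<in> lower_exps s"
  shows "1 / b \<in> upper_exps \<nu>"
proof -
  obtain D x0 where "0 < D" and bound: "\<And>x l. x0 \<le> x \<Longrightarrow> 1 \<le> l \<Longrightarrow> D * l powr b * s x \<le> s (l * x)"
    using assms(2) unfolding lower_exps_def by blast
  define N where "N = nat \<lceil>x0\<rceil>"
  define C where "C = max 1 (2 * D powr (- 1 / b))"
  have "\<nu> (l * t) \<le> C * l powr (1 / b) * \<nu> t" if "m N \<le> t" "1 \<le> l" for t l
  proof -
    define n where "n = cnt t"
    define n' where "n' = cnt (l * t)"
    have "0 < t" using that quot_pos[of N] by simp
    have "Suc N \<le> n" unfolding n_def using Suc_le_cnt[OF that(1)] .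
    then have "x0 \<le> real n + 1" unfolding N_def by linarith
    have "n \<le> n'" unfolding n_def n'_def using that \<open>0 < t\<close> by (intro cnt_mono) simp
    have "1 * 1 \<le> C * l powr (1 / b)"
      using that \<open>0 < b\<close> by (intro mult_mono) (auto simp: C_def ge_one_powr_ge_zero)
    show ?thesis
    proof (cases "n' \<le> n")
      case True
      then have "\<nu> (l * t) \<le> 1 * \<nu> t" by (simp add: nu_eq_cnt n_def n'_def)
      also have "\<dots> \<le> C * l powr (1 / b) * \<nu> t"
        using \<open>1 * 1 \<le> C * l powr (1 / b)\<close> by (intro mult_right_mono) (simp_all add: nu_eq_cnt)
      finally show ?thesis .
    next
      case False
      define \<mu> where "\<mu> = real n' / (real n + 1)"
      have "1 \<le> \<mu>" "\<mu> * (real n + 1) = real n'" using False by (auto simp: \<mu>_def)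
      have "D * \<mu> powr b * t < D * \<mu> powr b * s (real n + 1)"
        using less_step_Suc_cnt[of t] \<open>0 < D\<close> \<open>1 \<le> \<mu>\<close> by (simp add: n_def)
      also have "\<dots> \<le> s (real n')"
        using bound[OF \<open>x0 \<le> real n + 1\<close> \<open>1 \<le> \<mu>\<close>] \<open>\<mu> * (real n + 1) = real n'\<close> by simp
      also have "\<dots> \<le> l * t" using step_cnt_le[of "l * t"] False by (simp add: n'_def)
      finally have "D * \<mu> powr b \<le> l" using \<open>0 < t\<close> by simp
      then have "\<mu> \<le> D powr (- 1 / b) * l powr (1 / b)"
        using assms \<open>0 < D\<close> \<open>1 \<le> \<mu>\<close> that by (intro mult_powr_le_imp_le_powr_inverse) auto
      have "real n' = \<mu> * (real n + 1)" using \<open>\<mu> * (real n + 1) = real n'\<close> by simp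
      also have "\<dots> \<le> (D powr (- 1 / b) * l powr (1 / b)) * (2 * real n)"
        using \<open>\<mu> \<le> _\<close> \<open>1 \<le> \<mu>\<close> \<open>Suc N \<le> n\<close> by (intro mult_mono) auto
      also have "\<dots> = (2 * D powr (- 1 / b)) * l powr (1 / b) * real n" by simp
      also have "\<dots> \<le> C * l powr (1 / b) * real n" unfolding C_def by (intro mult_right_mono) auto
      finally show ?thesis by (simp add: nu_eq_cnt n_def n'_def)
    qed
  qed
  moreover have "0 < C" by (simp add: C_def)
  ultimately show ?thesis unfolding upper_exps_def by blast
qed

lemma inverse_mem_lower_exps_step_if_upper_exp_nu:
  assumes "a \<in> upper_exps \<nu>"
  shows "1 / a \<in> lower_exps s"
proof -
  have "0 < a" using upper_exps_nu_pos assms by auto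
  obtain C t0 where "0 < C" and bound: "\<And>t l. t0 \<le> t \<Longrightarrow> 1 \<le> l \<Longrightarrow> \<nu> (l * t) \<le> C * l powr a * \<nu> t"
    using assms unfolding upper_exps_def by blast
  obtain N where N: "2 * max t0 1 < m N" using quot_unbounded by blast
  define D where "D = (2 * C) powr (- 1 / a) / 2"
  have "D * l powr (1 / a) * s x \<le> s (l * x)" if "real N + 1 \<le> x" "4 \<le> l" for x l
  proof -
    define t where "t = s x / 2"
    define T where "T = s (l * x)"
    have "1 \<le> x" using that by simp
    then have "4 * 1 \<le> l * x" using that by (intro mult_mono) auto
    have "m N \<le> s x" using step_mono[OF that(1)] step_of_nat[of N] by simp
    then have "t0 \<le> t" "1 \<le> t" unfolding t_def using N by auto
    have "real (cnt t) < x" unfolding t_def using step_pos[of x] \<open>1 \<le> x\<close> by (intro cnt_less_if_less_step) auto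
    have "l * x / 2 < real (cnt T)" using less_Suc_cnt_step[of "l * x"] \<open>4 * 1 \<le> l * x\<close> by (simp add: T_def)
    have "t \<le> T"
    proof (rule ccontr)
      assume "\<not> t \<le> T"
      then have "cnt T \<le> cnt t" by (simp add: cnt_mono)
      moreover have "x \<le> l * x / 2" using that \<open>1 \<le> x\<close> by (simp add: field_simps)
      ultimately show False using \<open>l * x / 2 < real (cnt T)\<close> \<open>real (cnt t) < x\<close> by linarith
    qed
    define \<mu> where "\<mu> = T / t"
    have "1 \<le> \<mu>" "T = \<mu> * t" unfolding \<mu>_def using \<open>t \<le> T\<close> \<open>1 \<le> t\<close> by auto
    have "l * x / 2 < \<nu> T" using \<open>l * x / 2 < real (cnt T)\<close> by (simp add: nu_eq_cnt)
    also have "\<dots> \<le> C * \<mu> powr a * \<nu> t" unfolding \<open>T = \<mu> * t\<close> using bound \<open>t0 \<le> t\<close> \<open>1 \<le> \<mu>\<close> by simp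
    also have "\<dots> \<le> C * \<mu> powr a * x"
      using \<open>real (cnt t) < x\<close> \<open>0 < C\<close> by (intro mult_left_mono) (auto simp: nu_eq_cnt)
    finally have "l \<le> 2 * C * \<mu> powr a" using \<open>1 \<le> x\<close> by (simp add: field_simps)
    then have "(2 * C) powr (- 1 / a) * l powr (1 / a) \<le> \<mu>"
      using \<open>0 < a\<close> \<open>0 < C\<close> \<open>1 \<le> \<mu>\<close> that by (intro le_mult_powr_imp_powr_inverse_le) auto
    then have "(2 * C) powr (- 1 / a) * l powr (1 / a) * (s x / 2) \<le> \<mu> * t"
      unfolding t_def using step_pos[of x] by (intro mult_right_mono) auto
    then show ?thesis by (simp add: D_def T_def \<open>T = \<mu> * t\<close>[symmetric])
  qed
  moreover have "0 < D" unfolding D_def using \<open>0 < C\<close> by simp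
  ultimately show ?thesis
    using \<open>0 < a\<close> step_pos by (intro mem_lower_exps_if_bound_for_large[of "real N + 1" _ 4])
      (auto intro: less_imp_le step_mono)
qed

lemma inverse_mem_lower_exps_nu_if_upper_exp_step:
  assumes "a \<in> upper_exps s"
  shows "1 / a \<in> lower_exps \<nu>"
proof -
  have "0 < a" using upper_exps_step_pos assms by auto
  obtain C x0 where "0 < C" and bound: "\<And>x l. x0 \<le> x \<Longrightarrow> 1 \<le> l \<Longrightarrow> s (l * x) \<le> C * l powr a * s x"
    using assms unfolding upper_exps_def by blast
  define N where "N = nat \<lceil>x0\<rceil>"
  define D where "D = C powr (- 1 / a) / 2"
  have "D * l powr (1 / a) * \<nu> t \<le> \<nu> (l * t)" if "m N \<le> t" "1 \<le> l" for t l
  proof -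
    define n where "n = cnt t"
    define n' where "n' = cnt (l * t)"
    have "0 < t" using that quot_pos[of N] by simp
    have "Suc N \<le> n" unfolding n_def using Suc_le_cnt[OF that(1)] .
    then have "x0 \<le> real n" "1 \<le> n" unfolding N_def by linarith+
    have "n \<le> n'" unfolding n_def n'_def using that \<open>0 < t\<close> by (intro cnt_mono) simp
    define \<mu> where "\<mu> = (real n' + 1) / real n"
    have "1 \<le> \<mu>" "\<mu> * real n = real n' + 1" using \<open>n \<le> n'\<close> \<open>1 \<le> n\<close> by (auto simp: \<mu>_def)
    have "l * t < s (real n' + 1)" using less_step_Suc_cnt[of "l * t"] by (simp add: n'_def)
    also have "\<dots> \<le> C * \<mu> powr a * s (real n)"
      using bound[OF \<open>x0 \<le> real n\<close> \<open>1 \<le> \<mu>\<close>] \<open>\<mu> * real n = real n' + 1\<close> by simp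
    also have "\<dots> \<le> C * \<mu> powr a * t"
      using step_cnt_le[of t] \<open>1 \<le> n\<close> \<open>0 < C\<close> by (intro mult_left_mono) (auto simp: n_def)
    finally have "l \<le> C * \<mu> powr a" using \<open>0 < t\<close> by simp
    then have "C powr (- 1 / a) * l powr (1 / a) \<le> \<mu>"
      using \<open>0 < a\<close> \<open>0 < C\<close> \<open>1 \<le> \<mu>\<close> that by (intro le_mult_powr_imp_powr_inverse_le) auto
    then have "C powr (- 1 / a) * l powr (1 / a) * real n \<le> real n' + 1"
      using mult_right_mono[of _ \<mu> "real n"] \<open>\<mu> * real n = real n' + 1\<close> by simp
    moreover have "1 \<le> real n'" using \<open>n \<le> n'\<close> \<open>1 \<le> n\<close> by simp
    ultimately show ?thesis by (simp add: D_def nu_eq_cnt n_def n'_def)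
  qed
  moreover have "0 < D" unfolding D_def using \<open>0 < C\<close> by simp
  ultimately show ?thesis unfolding lower_exps_def by blast
qed

lemma inverse_mem_upper_exps_step_if_lower_exp_nu:
  assumes "0 < b" "b \<in> lower_exps \<nu>"
  shows "1 / b \<in> upper_exps s"
proof -
  obtain D t0 where "0 < D" and bound: "\<And>t l. t0 \<le> t \<Longrightarrow> 1 \<le> l \<Longrightarrow> D * l powr b * \<nu> t \<le> \<nu> (l * t)"
    using assms(2) unfolding lower_exps_def by blast
  obtain N where N: "max t0 1 < m N" using quot_unbounded by blast
  define C where "C = max 2 (2 * (D / 2) powr (- 1 / b))"
  have "s (l * x) \<le> C * l powr (1 / b) * s x" if "real N + 1 \<le> x" "1 \<le> l" for x l
  proof -
    define t where "t = s x"
    define T where "T = s (l * x)"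
    have "1 \<le> x" using that by simp
    then have "1 * 1 \<le> l * x" using that by (intro mult_mono) auto
    have "m N \<le> t" unfolding t_def using step_mono[OF that(1)] step_of_nat[of N] by simp
    then have "t0 \<le> t" "0 < t" using N by auto
    have "x < real (cnt t) + 1" using less_Suc_cnt_step[OF \<open>1 \<le> x\<close>] by (simp add: t_def)
    moreover from this have "1 \<le> real (cnt t)" using \<open>1 \<le> x\<close> by (cases "cnt t") auto
    ultimately have "x / 2 < real (cnt t)" by linarith
    have "real (cnt (T / 2)) < l * x"
      using step_pos[of "l * x"] \<open>1 * 1 \<le> l * x\<close> by (intro cnt_less_if_less_step) (auto simp: T_def)
    have "1 \<le> C * l powr (1 / b)"
      using that \<open>0 < b\<close> mult_mono[of 1 C 1 "l powr (1 / b)"] by (simp add: C_def ge_one_powr_ge_zero)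
    show ?thesis
    proof (cases "T / 2 \<le> t")
      case True
      then have "T \<le> 2 * t" by simp
      also have "\<dots> \<le> C * l powr (1 / b) * t"
        using \<open>0 < t\<close> that \<open>0 < b\<close> mult_mono[of 2 C 1 "l powr (1 / b)"]
        by (intro mult_right_mono) (auto simp: C_def ge_one_powr_ge_zero)
      finally show ?thesis by (simp add: T_def t_def)
    next
      case False
      define \<mu> where "\<mu> = (T / 2) / t"
      have "1 \<le> \<mu>" "T / 2 = \<mu> * t" unfolding \<mu>_def using False \<open>0 < t\<close> by auto
      have "D * \<mu> powr b * (x / 2) \<le> D * \<mu> powr b * \<nu> t"
        using \<open>x / 2 < real (cnt t)\<close> \<open>0 < D\<close> by (intro mult_left_mono) (auto simp: nu_eq_cnt)
      also have "\<dots> \<le> \<nu> (T / 2)" unfolding \<open>T / 2 = \<mu> * t\<close> using bound \<open>t0 \<le> t\<close> \<open>1 \<le> \<mu>\<close> by simp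
      also have "\<dots> < l * x" using \<open>real (cnt (T / 2)) < l * x\<close> by (simp add: nu_eq_cnt)
      finally have "D / 2 * \<mu> powr b \<le> l" using \<open>1 \<le> x\<close> by (simp add: field_simps)
      then have "\<mu> \<le> (D / 2) powr (- 1 / b) * l powr (1 / b)"
        using assms \<open>0 < D\<close> \<open>1 \<le> \<mu>\<close> that by (intro mult_powr_le_imp_le_powr_inverse) auto
      then have "T \<le> (2 * (D / 2) powr (- 1 / b)) * l powr (1 / b) * t"
        using \<open>T / 2 = \<mu> * t\<close> \<open>0 < t\<close> by (simp add: mult_right_mono)
      also have "\<dots> \<le> C * l powr (1 / b) * t"
        unfolding C_def using \<open>0 < t\<close> by (intro mult_right_mono) auto
      finally show ?thesis by (simp add: T_def t_def)
    qed
  qed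
  moreover have "0 < C" by (simp add: C_def)
  ultimately show ?thesis unfolding upper_exps_def by blast
qed

section \<open>The counting function and the associated weight function\<close>

lemma omega_exp_power_le_sum:
  assumes "0 < t"
  shows "\<omega> (exp (real n) * t) \<le> \<omega> t + (\<Sum>k<n. \<nu> (exp (real k + 1) * t))"
proof (induction n)
  case (Suc n)
  have "\<omega> (exp (real (Suc n)) * t) = \<omega> (exp 1 * (exp (real n) * t))" by (simp add: exp_add ac_simps)
  also have "\<dots> \<le> \<nu> (exp (real n + 1) * t) + \<omega> (exp (real n) * t)"
    using omega_mult_le[of "exp 1" "exp (real n) * t"] assms by (simp add: exp_add mult_ac)
  finally show ?case using Suc by simp
qed simp

lemma sum_le_omega_exp_power:
  assumes "0 < t"
  shows "\<omega> t + (\<Sum>k<n. \<nu> (exp (real k) * t)) \<le> \<omega> (exp (real n) * t)"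
proof (induction n)
  case (Suc n)
  have "\<nu> (exp (real n) * t) + \<omega> (exp (real n) * t) \<le> \<omega> (exp 1 * (exp (real n) * t))"
    using assms by (intro nu_plus_omega_le_omega_exp) simp
  also have "\<dots> = \<omega> (exp (real (Suc n)) * t)" by (simp add: exp_add ac_simps)
  finally show ?case using Suc by simp
qed simp

lemma omega_le_nu_if_doubling:
  assumes "1 \<le> H" "0 < u" "2 * \<omega> u \<le> \<omega> (H * u)"
  shows "\<omega> (H * u) \<le> 2 * ln H * \<nu> (H * u)"
  using omega_mult_le[OF assms(1,2)] assms(3) by (simp add: mult_ac)

lemma upper_exps_omega_pos: "upper_exps \<omega> \<subseteq> {0<..}"
  by (rule upper_exps_pos[of "2 * m 0"]) (auto intro: omega_pos omega_unbounded)

lemma omega_exp_power_le_if_upper_exp_nu: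
  assumes "0 < a" "0 < C"
    and bound: "\<And>t l. t1 \<le> t \<Longrightarrow> 1 \<le> l \<Longrightarrow> \<nu> (l * t) \<le> C * l powr a * \<nu> t"
    and "0 < t1" "exp 1 * t1 \<le> t"
  shows "\<omega> (exp (real n) * t) \<le> (1 + C * exp (2 * a) / (exp a - 1)) * exp (a * real n) * \<omega> t"
proof -
  define Q where "Q = C * exp (2 * a) / (exp a - 1)"
  have "1 < exp a" "0 < t" using assms by (auto intro: less_le_trans[of 0 "exp 1 * t1"])
  have "0 \<le> Q" unfolding Q_def using \<open>0 < C\<close> \<open>1 < exp a\<close> by simp
  have "t1 \<le> t / exp 1" using assms by (simp add: field_simps)
  \<comment> \<open>Each step of the telescoping sum is controlled by \<open>\<nu>(t/e) \<le> \<omega>(t)\<close>.\<close>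
  have "\<nu> (exp (real k + 1) * t) \<le> C * exp (2 * a) * exp a ^ k * \<omega> t" for k
  proof -
    have "exp (real k + 2) = exp (real k + 1) * exp 1" by (simp flip: exp_add)
    then have "\<nu> (exp (real k + 1) * t) = \<nu> (exp (real k + 2) * (t / exp 1))" by simp
    also have "\<dots> \<le> C * exp (real k + 2) powr a * \<nu> (t / exp 1)"
      using \<open>t1 \<le> t / exp 1\<close> by (intro bound) auto
    also have "\<dots> \<le> C * exp (real k + 2) powr a * \<omega> t"
      using nu_le_omega_exp[of "t / exp 1"] \<open>0 < t\<close> \<open>0 < C\<close> by (intro mult_left_mono) auto
    also have "exp (real k + 2) powr a = exp (2 * a) * exp a ^ k"
      by (simp add: powr_def exp_add[symmetric] exp_of_nat_mult[symmetric] algebra_simps)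
    finally show ?thesis by (simp add: mult_ac)
  qed
  then have "(\<Sum>k<n. \<nu> (exp (real k + 1) * t)) \<le> C * exp (2 * a) * (\<Sum>k<n. exp a ^ k) * \<omega> t"
    by (simp add: sum_mono sum_distrib_left sum_distrib_right mult_ac)
  also have "\<dots> = Q * (exp a ^ n - 1) * \<omega> t"
    using \<open>1 < exp a\<close> by (simp add: Q_def geometric_sum)
  also have "\<dots> \<le> Q * exp (a * real n) * \<omega> t"
    using \<open>0 \<le> Q\<close> omega_nonneg[OF \<open>0 < t\<close>]
    by (intro mult_right_mono mult_left_mono) (auto simp: exp_of_nat_mult[symmetric] mult.commute)
  finally have "\<omega> (exp (real n) * t) \<le> \<omega> t + Q * exp (a * real n) * \<omega> t"
    using omega_exp_power_le_sum[OF \<open>0 < t\<close>, of n] by simp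
  also have "\<dots> \<le> (1 + Q) * exp (a * real n) * \<omega> t"
    using \<open>0 < a\<close> omega_nonneg[OF \<open>0 < t\<close>] mult_right_mono[of 1 "exp (a * real n)" "\<omega> t"]
    by (simp add: algebra_simps)
  finally show ?thesis unfolding Q_def .
qed

lemma upper_exps_nu_subset_omega: "upper_exps \<nu> \<subseteq> upper_exps \<omega>"
proof
  fix a assume "a \<in> upper_exps \<nu>"
  then have "0 < a" using upper_exps_nu_pos by auto
  obtain C t0 where "0 < C" and bound: "\<And>t l. t0 \<le> t \<Longrightarrow> 1 \<le> l \<Longrightarrow> \<nu> (l * t) \<le> C * l powr a * \<nu> t"
    using \<open>a \<in> upper_exps \<nu>\<close> unfolding upper_exps_def by blast
  define t1 where "t1 = max t0 1"
  have bound1: "\<nu> (l * t) \<le> C * l powr a * \<nu> t" if "t1 \<le> t" "1 \<le> l" for t l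
    using bound that unfolding t1_def by simp
  have "0 < t1" "0 < exp 1 * t1" unfolding t1_def by (simp_all add: less_max_iff_disj)
  show "a \<in> upper_exps \<omega>"
  proof (rule mem_upper_exps_if_exp_power_bound)
    show "\<omega> (exp (real n) * t) \<le> (1 + C * exp (2 * a) / (exp a - 1)) * exp (a * real n) * \<omega> t"
      if "exp 1 * t1 \<le> t" for t n
      by (rule omega_exp_power_le_if_upper_exp_nu[OF \<open>0 < a\<close> \<open>0 < C\<close> bound1 \<open>0 < t1\<close> that])
    show "0 < 1 + C * exp (2 * a) / (exp a - 1)" using \<open>0 < C\<close> \<open>0 < a\<close> by (simp add: add_pos_nonneg)
  qed (use \<open>0 < exp 1 * t1\<close> \<open>0 < a\<close> in \<open>auto intro: omega_nonneg omega_mono\<close>)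
qed

lemma omega_increment_ge_if_lower_exp_nu:
  assumes bound: "\<And>t l. t1 \<le> t \<Longrightarrow> 1 \<le> l \<Longrightarrow> D * l powr b * \<nu> t \<le> \<nu> (l * t)"
    and "0 < D" "0 < t1" "t1 \<le> v" "1 \<le> l"
  shows "D * l powr b * (\<omega> (exp (real n) * v) - \<omega> v)
    \<le> \<omega> (exp (real n) * (exp 1 * l * v)) - \<omega> (exp 1 * l * v)"
proof -
  have "0 < v" using assms by simp
  have "D * l powr b * (\<omega> (exp (real n) * v) - \<omega> v) \<le> D * l powr b * (\<Sum>k<n. \<nu> (exp (real k + 1) * v))"
    using omega_exp_power_le_sum[OF \<open>0 < v\<close>, of n] \<open>0 < D\<close> by (intro mult_left_mono) auto
  also have "\<dots> = (\<Sum>k<n. D * l powr b * \<nu> (exp (real k + 1) * v))" by (simp add: sum_distrib_left)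
  also have "\<dots> \<le> (\<Sum>k<n. \<nu> (exp (real k) * (exp 1 * l * v)))"
  proof (rule sum_mono)
    fix k
    have "1 * v \<le> exp (real k + 1) * v" by (rule mult_right_mono) (use \<open>0 < v\<close> in auto)
    then have "t1 \<le> exp (real k + 1) * v" using \<open>t1 \<le> v\<close> by simp
    then have "D * l powr b * \<nu> (exp (real k + 1) * v) \<le> \<nu> (l * (exp (real k + 1) * v))"
      using bound \<open>1 \<le> l\<close> by blast
    also have "l * (exp (real k + 1) * v) = exp (real k) * (exp 1 * l * v)" by (simp add: exp_add)
    finally show "D * l powr b * \<nu> (exp (real k + 1) * v) \<le> \<nu> (exp (real k) * (exp 1 * l * v))" .
  qed
  also have "\<dots> \<le> \<omega> (exp (real n) * (exp 1 * l * v)) - \<omega> (exp 1 * l * v)"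
    using sum_le_omega_exp_power[of "exp 1 * l * v" n] \<open>0 < v\<close> \<open>1 \<le> l\<close> by simp
  finally show ?thesis .
qed

lemma pos_lower_exp_omega_if_lower_exp_nu:
  assumes "0 < b" "b \<in> lower_exps \<nu>"
  shows "b \<in> lower_exps \<omega>"
proof -
  obtain D t0 where "0 < D" and bound: "\<And>t l. t0 \<le> t \<Longrightarrow> 1 \<le> l \<Longrightarrow> D * l powr b * \<nu> t \<le> \<nu> (l * t)"
    using assms(2) unfolding lower_exps_def by blast
  define t1 where "t1 = max t0 1"
  have "0 < t1" unfolding t1_def by (simp add: less_max_iff_disj)
  have bound1: "D * l powr b * \<nu> t \<le> \<nu> (l * t)" if "t1 \<le> t" "1 \<le> l" for t l
    using bound that unfolding t1_def by simp
  define W where "W = \<omega> (exp 1 * t1)"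
  define t2 where "t2 = max (exp 1 * t1) (m 0 * exp (2 * W))"
  \<comment> \<open>Writing \<open>t = e\<^sup>n v\<close> with \<open>v \<in> [t1, e t1)\<close>, the increment from \<open>v\<close> to \<open>t\<close> carries at least half of \<open>\<omega>(t)\<close>.\<close>
  have "D / 2 * l powr b * \<omega> t \<le> \<omega> (exp 1 * l * t)" if "t2 \<le> t" "1 \<le> l" for t l
  proof -
    have "exp 1 * t1 \<le> t" "0 < t" using that \<open>0 < t1\<close> unfolding t2_def by (auto intro: less_le_trans[of 0 "exp 1 * t1"])
    moreover have "1 * t1 \<le> exp 1 * t1" by (rule mult_right_mono) (use \<open>0 < t1\<close> in auto)
    ultimately have "t1 \<le> t" by simp
    obtain n v where "t = exp (real n) * v" "t1 \<le> v" "v < exp 1 * t1"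
      using exp_nat_mult_decomposition[OF \<open>0 < t1\<close> \<open>t1 \<le> t\<close>] by blast
    have "\<omega> v \<le> W" unfolding W_def using \<open>t1 \<le> v\<close> \<open>v < exp 1 * t1\<close> \<open>0 < t1\<close> by (intro omega_mono) auto
    have "ln (m 0 * exp (2 * W)) \<le> ln t"
      using that quot_pos[of 0] \<open>0 < t\<close> unfolding t2_def by (subst ln_le_cancel_iff) auto
    then have "2 * W \<le> \<omega> t" using ln_le_omega[OF \<open>0 < t\<close>] quot_pos[of 0] by (simp add: ln_mult)
    have "D / 2 * l powr b * \<omega> t \<le> D * l powr b * (\<omega> t - \<omega> v)"
      using \<open>\<omega> v \<le> W\<close> \<open>2 * W \<le> \<omega> t\<close> \<open>0 < D\<close> mult_left_mono[of "\<omega> t / 2" "\<omega> t - \<omega> v" "D * l powr b"]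
      by (simp add: field_simps)
    also have "\<dots> \<le> \<omega> (exp 1 * l * t) - \<omega> (exp 1 * l * v)"
      using omega_increment_ge_if_lower_exp_nu[OF bound1 \<open>0 < D\<close> \<open>0 < t1\<close> \<open>t1 \<le> v\<close> \<open>1 \<le> l\<close>, of n]
      unfolding \<open>t = exp (real n) * v\<close> by (simp add: ac_simps)
    also have "\<dots> \<le> \<omega> (exp 1 * l * t)"
      using omega_nonneg[of "exp 1 * l * v"] \<open>0 < t1\<close> \<open>t1 \<le> v\<close> \<open>1 \<le> l\<close> by simp
    finally show ?thesis .
  qed
  moreover have "0 < t2" unfolding t2_def using \<open>0 < t1\<close> by (simp add: less_max_iff_disj)
  ultimately show ?thesis
    using \<open>0 < b\<close> \<open>0 < D\<close>
    by (intro mem_lower_exps_if_rescaled_bound[of t2 _ "exp 1" b "D / 2"])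
      (auto intro: omega_nonneg omega_mono)
qed

lemma omega_le_nu_if_pos_lower_exp_omega:
  assumes "0 < b" "b \<in> lower_exps \<omega>"
  obtains c v0 where "0 < c" "\<And>v. v0 \<le> v \<Longrightarrow> \<omega> v \<le> c * \<nu> v"
proof -
  obtain D t0 where "0 < D" and bound: "\<And>t l. t0 \<le> t \<Longrightarrow> 1 \<le> l \<Longrightarrow> D * l powr b * \<omega> t \<le> \<omega> (l * t)"
    using assms(2) unfolding lower_exps_def by blast
  define t1 where "t1 = max t0 1"
  have "1 \<le> t1" unfolding t1_def by simp
  define H where "H = max (exp 1) ((2 / D) powr (1 / b))"
  have "exp 1 \<le> H" unfolding H_def by simp
  then have "1 \<le> H" "1 \<le> ln H" using exp_ge_add_one_self[of 1] by (linarith, subst ln_ge_iff) auto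
  have "2 / D = ((2 / D) powr (1 / b)) powr b" using \<open>0 < b\<close> \<open>0 < D\<close> by (simp add: powr_powr)
  also have "\<dots> \<le> H powr b" unfolding H_def using \<open>0 < b\<close> by (intro powr_mono2) auto
  finally have "2 \<le> D * H powr b" using \<open>0 < D\<close> by (simp add: field_simps)
  have "\<omega> v \<le> 2 * ln H * \<nu> v" if "H * t1 \<le> v" for v
  proof -
    have "1 * 1 \<le> H * t1" using \<open>1 \<le> H\<close> \<open>1 \<le> t1\<close> by (intro mult_mono) auto
    then have "t1 \<le> v / H" "0 < v / H" using that \<open>1 \<le> H\<close> by (simp_all add: field_simps)
    have "2 * \<omega> (v / H) \<le> D * H powr b * \<omega> (v / H)"
      using \<open>2 \<le> D * H powr b\<close> omega_nonneg[OF \<open>0 < v / H\<close>] by (intro mult_right_mono) auto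
    also have "\<dots> \<le> \<omega> (H * (v / H))" using \<open>t1 \<le> v / H\<close> \<open>1 \<le> H\<close> unfolding t1_def by (intro bound) auto
    finally show ?thesis
      using omega_le_nu_if_doubling[OF \<open>1 \<le> H\<close> \<open>0 < v / H\<close>] \<open>1 \<le> H\<close> by simp
  qed
  with \<open>1 \<le> ln H\<close> show ?thesis by (intro that[of "2 * ln H" "H * t1"]) auto
qed

lemma omega_le_nu_if_moderate_growth:
  assumes "moderate_growth M"
  obtains c where "0 < c" "\<And>v. 0 < v \<Longrightarrow> \<omega> v \<le> c * \<nu> v"
proof -
  obtain H where "exp 1 \<le> H" and doubling: "\<And>t. 0 < t \<Longrightarrow> 2 * \<omega> t \<le> \<omega> (H * t)"
    using omega_doubling_if_moderate_growth[OF assms] by blast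
  then have "1 \<le> H" "1 \<le> ln H" using exp_ge_add_one_self[of 1] by (linarith, subst ln_ge_iff) auto
  have "\<omega> v \<le> 2 * ln H * \<nu> v" if "0 < v" for v
    using omega_le_nu_if_doubling[OF \<open>1 \<le> H\<close>, of "v / H"] doubling[of "v / H"] that \<open>1 \<le> H\<close> by simp
  with \<open>1 \<le> ln H\<close> show ?thesis by (intro that[of "2 * ln H"]) auto
qed

lemma pos_lower_exp_nu_if_lower_exp_omega:
  assumes "0 < b" "b \<in> lower_exps \<omega>"
  shows "b \<in> lower_exps \<nu>"
proof -
  obtain c v0 where "0 < c" and omega_le_nu: "\<And>v. v0 \<le> v \<Longrightarrow> \<omega> v \<le> c * \<nu> v"
    using omega_le_nu_if_pos_lower_exp_omega[OF assms] by blast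
  obtain D t0 where "0 < D" and bound: "\<And>t l. t0 \<le> t \<Longrightarrow> 1 \<le> l \<Longrightarrow> D * l powr b * \<omega> t \<le> \<omega> (l * t)"
    using assms(2) unfolding lower_exps_def by blast
  define t1 where "t1 = max (max t0 v0) 1"
  have "D / c * l powr b * \<nu> t \<le> \<nu> (exp 1 * l * t)" if "t1 \<le> t" "1 \<le> l" for t l
  proof -
    have "0 < t" using that by (simp add: t1_def)
    have "1 * 1 \<le> exp 1 * l" using that by (intro mult_mono) auto
    then have "t \<le> exp 1 * t" "t \<le> exp 1 * l * t" using \<open>0 < t\<close> by (simp_all add: mult_le_cancel_right1)
    then have "t0 \<le> exp 1 * t" "v0 \<le> exp 1 * l * t" using that unfolding t1_def by linarith+
    have "D * l powr b * \<nu> t \<le> D * l powr b * \<omega> (exp 1 * t)"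
      using nu_le_omega_exp[OF \<open>0 < t\<close>] \<open>0 < D\<close> by (intro mult_left_mono) auto
    also have "\<dots> \<le> \<omega> (exp 1 * l * t)" using bound[OF \<open>t0 \<le> exp 1 * t\<close> \<open>1 \<le> l\<close>] by (simp add: ac_simps)
    also have "\<dots> \<le> c * \<nu> (exp 1 * l * t)" by (rule omega_le_nu[OF \<open>v0 \<le> exp 1 * l * t\<close>])
    finally show ?thesis using \<open>0 < c\<close> by (simp add: field_simps)
  qed
  moreover have "0 < D / c" "1 \<le> t1" using \<open>0 < D\<close> \<open>0 < c\<close> by (auto simp: t1_def)
  ultimately show ?thesis
    using \<open>0 < b\<close> by (intro mem_lower_exps_if_rescaled_bound[of t1 _ "exp 1" b "D / c"])
      (auto intro: cnt_mono simp: nu_eq_cnt)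
qed

lemma upper_exp_nu_if_upper_exp_omega:
  assumes "moderate_growth M" "a \<in> upper_exps \<omega>"
  shows "a \<in> upper_exps \<nu>"
proof -
  obtain c where "0 < c" and omega_le_nu: "\<And>v. 0 < v \<Longrightarrow> \<omega> v \<le> c * \<nu> v"
    using omega_le_nu_if_moderate_growth[OF assms(1)] by blast
  obtain C t0 where "0 < C" and bound: "\<And>t l. t0 \<le> t \<Longrightarrow> 1 \<le> l \<Longrightarrow> \<omega> (l * t) \<le> C * l powr a * \<omega> t"
    using assms(2) unfolding upper_exps_def by blast
  have "\<nu> (l * t) \<le> (C * exp a * c) * l powr a * \<nu> t" if "max t0 1 \<le> t" "1 \<le> l" for t l
  proof -
    have "0 < t" using that by simp
    have "1 * 1 \<le> exp 1 * l" using that by (intro mult_mono) auto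
    have "\<nu> (l * t) \<le> \<omega> (exp 1 * l * t)" using nu_le_omega_exp[of "l * t"] \<open>0 < t\<close> that by (simp add: ac_simps)
    also have "\<dots> \<le> C * (exp 1 * l) powr a * \<omega> t" using bound \<open>1 * 1 \<le> exp 1 * l\<close> that by simp
    also have "(exp 1 * l) powr a = exp a * l powr a" using that by (subst powr_mult) (auto simp: powr_def)
    also have "C * (exp a * l powr a) * \<omega> t \<le> C * (exp a * l powr a) * (c * \<nu> t)"
      using omega_le_nu[OF \<open>0 < t\<close>] \<open>0 < C\<close> by (intro mult_left_mono) auto
    finally show ?thesis by (simp add: ac_simps)
  qed
  moreover have "0 < C * exp a * c" using \<open>0 < C\<close> \<open>0 < c\<close> by simp
  ultimately show ?thesis unfolding upper_exps_def by blast
qed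

section \<open>The indices of the three functions\<close>

lemma alpha_idx_step: "alpha_idx s = Inf (ereal ` upper_exps s)"
  by (rule alpha_idx_eq_Inf_upper_exps[of 0]) (rule step_pos)

lemma beta_idx_step: "beta_idx s = Sup (ereal ` lower_exps s)"
  by (rule beta_idx_eq_Sup_lower_exps[of 0]) (rule step_pos)

lemma alpha_idx_nu: "alpha_idx \<nu> = Inf (ereal ` upper_exps \<nu>)"
  by (rule alpha_idx_eq_Inf_upper_exps[of "m 0"]) (rule nu_pos)

lemma beta_idx_nu: "beta_idx \<nu> = Sup (ereal ` lower_exps \<nu>)"
  by (rule beta_idx_eq_Sup_lower_exps[of "m 0"]) (rule nu_pos)

lemma alpha_idx_omega: "alpha_idx \<omega> = Inf (ereal ` upper_exps \<omega>)"
  by (rule alpha_idx_eq_Inf_upper_exps[of "2 * m 0"]) (rule omega_pos)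

lemma beta_idx_omega: "beta_idx \<omega> = Sup (ereal ` lower_exps \<omega>)"
  by (rule beta_idx_eq_Sup_lower_exps[of "2 * m 0"]) (rule omega_pos)

lemma zero_mem_lower_exps: "0 \<in> lower_exps s" "0 \<in> lower_exps \<nu>" "0 \<in> lower_exps \<omega>"
proof -
  show "0 \<in> lower_exps s" by (rule nonpos_mem_lower_exps[of 0]) (auto intro: step_pos step_mono)
  show "0 \<in> lower_exps \<nu>" by (rule nonpos_mem_lower_exps[of "m 0"]) (auto intro: nu_pos nu_mono)
  show "0 \<in> lower_exps \<omega>"
    by (rule nonpos_mem_lower_exps[of "2 * m 0"]) (auto intro: omega_pos omega_mono_above)
qed

lemma gamma_seq_eq_beta_idx_step: "gamma_seq M = beta_idx s"
  by (simp add: gamma_seq_eq_Sup_lower_exps_step beta_idx_step)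

lemma beta_idx_step_eq_inverse_alpha_idx_nu: "beta_idx s = inverse (alpha_idx \<nu>)"
  unfolding beta_idx_step alpha_idx_nu
proof (rule Sup_ereal_eq_inverse_Inf[OF upper_exps_nu_pos zero_mem_lower_exps(1)])
  show "\<exists>a\<in>upper_exps \<nu>. a \<le> 1 / b" if "b \<in> lower_exps s" "0 < b" for b
    using inverse_mem_upper_exps_nu_if_lower_exp_step that by blast
  show "\<exists>b\<in>lower_exps s. g \<le> b" if "a \<in> upper_exps \<nu>" "0 < g" "g < 1 / a" for a g
    using inverse_mem_lower_exps_step_if_upper_exp_nu that by (meson less_imp_le)
qed

lemma alpha_idx_step_eq_inverse_beta_idx_nu: "alpha_idx s = inverse (beta_idx \<nu>)"
  unfolding alpha_idx_step beta_idx_nu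
proof (rule Inf_ereal_eq_inverse_Sup[OF upper_exps_step_pos zero_mem_lower_exps(2)])
  show "\<exists>a\<in>upper_exps s. a \<le> 1 / b" if "b \<in> lower_exps \<nu>" "0 < b" for b
    using inverse_mem_upper_exps_step_if_lower_exp_nu that by blast
  show "\<exists>b\<in>lower_exps \<nu>. g \<le> b" if "a \<in> upper_exps s" "0 < g" "g < 1 / a" for a g
    using inverse_mem_lower_exps_nu_if_upper_exp_step that by (meson less_imp_le)
qed

lemma inverse_alpha_idx_nu_le_inverse_alpha_idx_omega: "inverse (alpha_idx \<nu>) \<le> inverse (alpha_idx \<omega>)"
proof (rule ereal_inverse_antimono)
  show "0 \<le> alpha_idx \<omega>" unfolding alpha_idx_omega using upper_exps_omega_pos by (intro Inf_greatest) auto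
  show "alpha_idx \<omega> \<le> alpha_idx \<nu>"
    unfolding alpha_idx_omega alpha_idx_nu using upper_exps_nu_subset_omega by (intro Inf_superset_mono image_mono)
qed

lemma gamma_fun_omega_eq_inverse_alpha_idx: "gamma_fun \<omega> = inverse (alpha_idx \<omega>)"
  unfolding alpha_idx_omega
  by (rule gamma_fun_eq_inverse_Inf_upper_exps[of "2 * m 0"])
    (auto intro: omega_pos omega_mono_above omega_unbounded)

lemma beta_idx_nu_eq_beta_idx_omega: "beta_idx \<nu> = beta_idx \<omega>"
  unfolding beta_idx_nu beta_idx_omega
  using zero_mem_lower_exps pos_lower_exp_omega_if_lower_exp_nu pos_lower_exp_nu_if_lower_exp_omega
  by (intro antisym Sup_ereal_le_if_positive_subset) auto

lemma alpha_idx_nu_eq_alpha_idx_omega_if_moderate_growth: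
  "moderate_growth M \<Longrightarrow> alpha_idx \<nu> = alpha_idx \<omega>"
  unfolding alpha_idx_nu alpha_idx_omega
  using upper_exps_nu_subset_omega upper_exp_nu_if_upper_exp_omega by (metis subsetI subset_antisym)

end

theorem corollary4p6:
  fixes M :: "nat \<Rightarrow> real"
  assumes "weight_seq M"
  shows "(gamma_seq M = beta_idx (step_fun (quot M))
       \<and> beta_idx (step_fun (quot M)) = inverse (alpha_idx (nu_c (quot M)))
       \<and> inverse (alpha_idx (nu_c (quot M))) \<le> inverse (alpha_idx (omega_w M))
       \<and> inverse (alpha_idx (omega_w M)) = gamma_fun (omega_w M))
       \<and> (alpha_idx (step_fun (quot M)) = inverse (beta_idx (nu_c (quot M)))
       \<and> inverse (beta_idx (nu_c (quot M))) = inverse (beta_idx (omega_w M)))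
       \<and> (moderate_growth M \<longrightarrow> gamma_seq M = gamma_fun (omega_w M))"
proof -
  interpret weight_sequence M by (rule weight_sequence.intro) (rule assms)
  have "moderate_growth M \<Longrightarrow> gamma_seq M = gamma_fun \<omega>"
    using gamma_seq_eq_beta_idx_step beta_idx_step_eq_inverse_alpha_idx_nu
      alpha_idx_nu_eq_alpha_idx_omega_if_moderate_growth gamma_fun_omega_eq_inverse_alpha_idx by simp
  then show ?thesis
    using gamma_seq_eq_beta_idx_step beta_idx_step_eq_inverse_alpha_idx_nu
      inverse_alpha_idx_nu_le_inverse_alpha_idx_omega gamma_fun_omega_eq_inverse_alpha_idx
      alpha_idx_step_eq_inverse_beta_idx_nu beta_idx_nu_eq_beta_idx_omega by simp
qed

end
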